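(* Consider the online firefighter game on the infinite square grid $\mathbb{L}_2=\mathbb{Z}\times\mathbb{Z}$ (described in the context). There is an online strategy for Player 1 that wins against every firefighter sequence $(f_i)_{i\geq 1}$ revealed by Player 2 which satisfies both: (i) there exists $N\geq 1$ with $\sum_{i=1}^N f_i\geq 4N$; and (ii) there exists an index $M\geq 1$ such that $f_i\geq 1$ for all $i\geq M$ and $f_i=0$ for all $i<M$.
   Context: The grid $\mathbb{L}_2$ has vertex set $\mathbb{Z}\times\mathbb{Z}$, with $(x,y)$ adjacent to $(x',y')$ iff $|x-x'|+|y-y'|=1$. A fire starts at an ignition vertex $v$ at time $0$ (so $v$ is burning). A firefighter sequence is a sequence $(f_i)_{i\geq 1}$ of non-negative integers. At each turn $i\geq 1$: Player 1 chooses at most $f_i$ vertices that are neither burning nor protected and protects them; then the fire spreads from every burning vertex to all of its unprotected neighbours. Once a vertex is burning or protected it remains so forever; unused firefighters are not carried over. Player 2 wins if at every turn some new vertex starts burning; otherwise Player 1 wins (the fire is contained). In the online version the sequence is chosen by Player 2 and revealed turn by turn: at turn $i$ Player 2 reveals $f_i$ to Player 1 just before Player 1 places firefighters, so an online strategy of Player 1 chooses its moves at turn $i$ based only on $f_1,\dots,f_i$ and the history of the game so far (in particular without knowing $M$ or $N$ in advance). *)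

theory Defs
  imports Main
begin

type_synonym vertex = "int \<times> int"

definition grid_adj :: "vertex \<Rightarrow> vertex \<Rightarrow> bool" where
  "grid_adj p q \<longleftrightarrow> \<bar>fst p - fst q\<bar> + \<bar>snd p - snd q\<bar> = 1"

text \<open>A firefighter sequence is f :: nat => nat, with f i the number of firefighters
  at turn i >= 1 (f 0 is irrelevant).  The values revealed up to turn n are
  the list [f 1, ..., f n].\<close>
definition revealed :: "(nat \<Rightarrow> nat) \<Rightarrow> nat \<Rightarrow> nat list" where
  "revealed f n = map f [1..<Suc n]"

text \<open>An online strategy maps the list of revealed values [f 1,...,f i] to the set of
  vertices protected at turn i.  Since the game is deterministic, the history of the
  game up to turn i is a function of f 1,...,f (i-1) and the strategy, so this
  captures exactly the strategies using only f 1..f i and the history.\<close>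
type_synonym strategy = "nat list \<Rightarrow> vertex set"

fun game_state :: "vertex \<Rightarrow> strategy \<Rightarrow> (nat \<Rightarrow> nat) \<Rightarrow> nat \<Rightarrow> vertex set \<times> vertex set" where
  "game_state v \<sigma> f 0 = ({v}, {})"
| "game_state v \<sigma> f (Suc i) =
     (let (B, P) = game_state v \<sigma> f i;
          P' = P \<union> \<sigma> (revealed f (Suc i))
      in (B \<union> {w. w \<notin> P' \<and> (\<exists>u\<in>B. grid_adj u w)}, P'))"

definition legal_move :: "vertex \<Rightarrow> strategy \<Rightarrow> (nat \<Rightarrow> nat) \<Rightarrow> nat \<Rightarrow> bool" where
  "legal_move v \<sigma> f n \<longleftrightarrow>
     (let (B, P) = game_state v \<sigma> f (n - 1); S = \<sigma> (revealed f n)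
      in finite S \<and> card S \<le> f n \<and> S \<inter> (B \<union> P) = {})"

definition player1_wins :: "vertex \<Rightarrow> strategy \<Rightarrow> (nat \<Rightarrow> nat) \<Rightarrow> bool" where
  "player1_wins v \<sigma> f \<longleftrightarrow>
     (\<exists>n\<ge>1. (\<forall>k\<in>{1..n}. legal_move v \<sigma> f k) \<and>
            fst (game_state v \<sigma> f n) = fst (game_state v \<sigma> f (n - 1)))"

end

theory Submission
  imports Defs
begin

text \<open>
  Until the first firefighter arrives the fire fills the l1-ball around the ignition vertex.
  From then on Player 1 grows a wall in both directions from the vertex just west of that
  ball, always building on the sphere that the fire is about to reach.  Beyond the two ends of the
  built part the wall is only planned, receding from the origin by 2 per row, so that each
  end needs a new vertex only every other turn; one firefighter per turn keeps both ends
  ahead of the fire.  The sphere of radius t has 4t vertices, and every turn the part of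
  it not yet covered by the wall grows by at most 4 minus the number of firefighters spent.
  Hence the potential ``uncovered vertices of the sphere at the fire front plus
  firefighters used so far minus 4t'' never becomes positive, and at the turn N with
  \<open>f 1 + \<dots> + f N \<ge> 4N\<close> Player 1 can protect the whole uncovered front, after which the fire
  is confined to a finite ball.
\<close>

section \<open>Walls in the grid\<close>

text \<open>
  The fire starts at the origin.  A wall state describes a region \<open>shielded\<close> from the
  fire.  West of the y-axis, row \<open>y\<close> is shielded from l1-distance \<open>west y\<close> on; if
  \<open>has_north\<close>, the wall has turned the corner into the quadrant \<open>x \<ge> 0, y > 0\<close>, where
  column \<open>x\<close> is shielded from l1-distance \<open>north x\<close> on, and likewise for the south.
  The upper end of the wall sits in row \<open>top_row\<close> (resp. column \<open>top_col\<close> of the north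
  arm); the lower end is handled by reflection in the x-axis.
\<close>

record wall =
  west :: "int \<Rightarrow> int"
  has_north :: bool
  north :: "int \<Rightarrow> int"
  has_south :: bool
  south :: "int \<Rightarrow> int"
  top_row :: int
  top_col :: int
  bot_row :: int
  bot_col :: int

definition mirror :: "wall \<Rightarrow> wall" where
  "mirror v = \<lparr>west = (\<lambda>y. west v (-y)), has_north = has_south v, north = south v,
     has_south = has_north v, south = north v,
     top_row = bot_row v, top_col = bot_col v, bot_row = top_row v, bot_col = top_col v\<rparr>"

lemma mirror_simps [simp]:
  "west (mirror v) y = west v (-y)" "has_north (mirror v) = has_south v"
  "north (mirror v) = south v" "has_south (mirror v) = has_north v" "south (mirror v) = north v"
  "top_row (mirror v) = bot_row v" "top_col (mirror v) = bot_col v"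
  "bot_row (mirror v) = top_row v" "bot_col (mirror v) = top_col v"
  by (simp_all add: mirror_def)

lemma mirror_mirror [simp]: "mirror (mirror v) = v"
  by (simp add: mirror_def)

fun mirror_pt :: "int \<times> int \<Rightarrow> int \<times> int" where
  "mirror_pt (x, y) = (x, -y)"

fun l1 :: "int \<times> int \<Rightarrow> int" where
  "l1 (x, y) = \<bar>x\<bar> + \<bar>y\<bar>"

fun shielded :: "wall \<Rightarrow> int \<times> int \<Rightarrow> bool" where
  "shielded v (x, y) \<longleftrightarrow>
     (x < 0 \<and> -x + \<bar>y\<bar> \<ge> west v y) \<or>
     (has_north v \<and> x \<ge> 0 \<and> y > 0 \<and> x + y \<ge> north v x) \<or>
     (has_south v \<and> x \<ge> 0 \<and> y < 0 \<and> x - y \<ge> south v x)"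

text \<open>Rows of the west part that are already covered by a north or south arm carry no wall.\<close>

definition west_capped :: "wall \<Rightarrow> int \<Rightarrow> bool" where
  "west_capped v y \<longleftrightarrow> (has_north v \<and> y \<ge> north v 0) \<or> (has_south v \<and> y \<le> - south v 0)"

fun on_wall :: "wall \<Rightarrow> int \<times> int \<Rightarrow> bool" where
  "on_wall v (x, y) \<longleftrightarrow>
     (x < 0 \<and> -x + \<bar>y\<bar> = west v y \<and> \<not> west_capped v y) \<or>
     (has_north v \<and> x \<ge> 0 \<and> y > 0 \<and> x + y = north v x) \<or>
     (has_south v \<and> x \<ge> 0 \<and> y < 0 \<and> x - y = south v x)"

lemma shielded_mirror: "shielded (mirror v) p = shielded v (mirror_pt p)"
  by (cases p) auto

lemma west_capped_mirror: "west_capped (mirror v) y = west_capped v (-y)"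
  by (auto simp: west_capped_def)

lemma on_wall_mirror: "on_wall (mirror v) p = on_wall v (mirror_pt p)"
  by (cases p) (auto simp: west_capped_mirror)

text \<open>
  In a profile, the wall vertices of neighbouring rows (or columns) lie in the same or in
  adjacent columns (rows), so the fire cannot slip through the wall diagonally.
\<close>

definition profile :: "(int \<Rightarrow> int) \<Rightarrow> bool" where
  "profile g \<longleftrightarrow> (\<forall>y\<ge>0. g y \<ge> y + 1 \<and> g y \<le> g (y+1) \<and> g (y+1) \<le> g y + 2)"

definition upper_regular :: "wall \<Rightarrow> bool" where
  "upper_regular v \<longleftrightarrow> profile (west v) \<and>
     (has_north v \<longrightarrow> profile (north v) \<and> (\<forall>y \<ge> north v 0 - 1. west v y = y + 1))"

definition regular :: "wall \<Rightarrow> bool" where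
  "regular v \<longleftrightarrow> upper_regular v \<and> upper_regular (mirror v)"

lemma regular_mirror: "regular (mirror v) = regular v"
  by (auto simp: regular_def)

lemma upper_regularI:
  assumes "\<And>y. y \<ge> 0 \<Longrightarrow> west v y \<ge> y + 1 \<and> west v y \<le> west v (y+1) \<and> west v (y+1) \<le> west v y + 2"
    and "has_north v \<Longrightarrow> (\<And>x. x \<ge> 0 \<Longrightarrow>
           north v x \<ge> x + 1 \<and> north v x \<le> north v (x+1) \<and> north v (x+1) \<le> north v x + 2)"
    and "has_north v \<Longrightarrow> (\<And>y. y \<ge> north v 0 - 1 \<Longrightarrow> west v y = y + 1)"
  shows "upper_regular v"
  unfolding upper_regular_def profile_def using assms by blast

lemma upper_regularD_west:
  "upper_regular v \<Longrightarrow> y \<ge> 0 \<Longrightarrow>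
     west v y \<ge> y + 1 \<and> west v y \<le> west v (y+1) \<and> west v (y+1) \<le> west v y + 2"
  unfolding upper_regular_def profile_def by blast

lemma upper_regularD_north:
  "upper_regular v \<Longrightarrow> has_north v \<Longrightarrow> x \<ge> 0 \<Longrightarrow>
     north v x \<ge> x + 1 \<and> north v x \<le> north v (x+1) \<and> north v (x+1) \<le> north v x + 2"
  unfolding upper_regular_def profile_def by blast

lemma upper_regularD_corner:
  "upper_regular v \<Longrightarrow> has_north v \<Longrightarrow> y \<ge> north v 0 - 1 \<Longrightarrow> west v y = y + 1"
  unfolding upper_regular_def by blast

lemma west_mono:
  assumes "upper_regular v" "0 \<le> a" "a \<le> b"
  shows "west v a \<le> west v b"
  using assms(3)
proof (induction b rule: int_ge_induct)
  case (step i)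
  then show ?case using upper_regularD_west[OF assms(1), of i] assms(2) by simp
qed simp

lemma north_mono:
  assumes "upper_regular v" "has_north v" "0 \<le> a" "a \<le> b"
  shows "north v a \<le> north v b"
  using assms(4)
proof (induction b rule: int_ge_induct)
  case (step i)
  then show ?case using upper_regularD_north[OF assms(1,2), of i] assms(3) by simp
qed simp

lemma grid_adj_cases:
  assumes "grid_adj (x, y) q"
  shows "q = (x+1, y) \<or> q = (x-1, y) \<or> q = (x, y+1) \<or> q = (x, y-1)"
  using assms unfolding grid_adj_def by (cases q) (auto simp: abs_if split: if_splits)

lemma grid_adj_sym: "grid_adj u w \<Longrightarrow> grid_adj w u"
  unfolding grid_adj_def by (simp add: abs_minus_commute)

lemma grid_adj_l1: "grid_adj u w \<Longrightarrow> l1 w \<le> l1 u + 1"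
  by (cases u, cases w) (auto simp: grid_adj_def)

lemma shielded_westI: "x < 0 \<Longrightarrow> -x + \<bar>y\<bar> \<ge> west v y \<Longrightarrow> shielded v (x, y)"
  by simp

lemma shielded_northI: "has_north v \<Longrightarrow> x \<ge> 0 \<Longrightarrow> y > 0 \<Longrightarrow> x + y \<ge> north v x \<Longrightarrow> shielded v (x, y)"
  by simp

lemma shielded_neighbours_west:
  assumes v: "regular v" and x: "x < 0" and y: "y \<ge> 0" and beyond: "-x + y > west v y"
  shows "shielded v (x+1, y) \<and> shielded v (x-1, y) \<and> shielded v (x, y+1) \<and> shielded v (x, y-1)"
proof -
  have H: "upper_regular v" and HL: "upper_regular (mirror v)" using v by (auto simp: regular_def)
  have w: "west v y \<ge> y + 1" "west v (y+1) \<le> west v y + 2" using upper_regularD_west[OF H y] by auto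
  have below: "west v (y-1) \<le> -x + \<bar>y-1\<bar>"
  proof (cases "y = 0")
    case True
    then show ?thesis using upper_regularD_west[OF HL, of 0] beyond by simp
  next
    case False
    then show ?thesis using upper_regularD_west[OF H, of "y-1"] y beyond by auto
  qed
  show ?thesis
    using x y beyond w below by (intro conjI shielded_westI) auto
qed

lemma shielded_neighbours_corner:
  assumes v: "regular v" and x: "x < 0" and y: "y \<ge> 0"
    and wall: "-x + y = west v y" and cap: "west_capped v y"
  shows "shielded v (x+1, y) \<and> shielded v (x-1, y) \<and> shielded v (x, y+1) \<and> shielded v (x, y-1)"
proof -
  have H: "upper_regular v" and HL: "upper_regular (mirror v)" using v by (auto simp: regular_def)
  have "\<not> (has_south v \<and> y \<le> - south v 0)"
    using upper_regularD_north[OF HL, of 0] y by auto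
  then have N: "has_north v" and yc: "y \<ge> north v 0" using cap unfolding west_capped_def by auto
  have t0: "north v 0 \<ge> 1" using upper_regularD_north[OF H N, of 0] by simp
  have c: "west v y = y + 1" "west v (y+1) = y + 2" "west v (y-1) = y"
    using upper_regularD_corner[OF H N] yc by auto
  then have "x = -1" using wall by simp
  then show ?thesis
    using N y yc t0 c by (intro conjI shielded_westI shielded_northI) auto
qed

lemma shielded_neighbours_north:
  assumes v: "regular v" and N: "has_north v" and x: "x \<ge> 0" and y: "y > 0"
    and beyond: "x + y > north v x"
  shows "shielded v (x+1, y) \<and> shielded v (x-1, y) \<and> shielded v (x, y+1) \<and> shielded v (x, y-1)"
proof -
  have H: "upper_regular v" using v by (auto simp: regular_def)
  have n: "north v x \<ge> x + 1" "north v (x+1) \<le> north v x + 2"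
    using upper_regularD_north[OF H N x] by auto
  have left: "shielded v (x-1, y)"
  proof (cases "x = 0")
    case True
    then have "west v y = y + 1" using upper_regularD_corner[OF H N] beyond by auto
    then show ?thesis using True y by simp
  next
    case False
    then have "north v (x-1) \<le> north v x" using upper_regularD_north[OF H N, of "x-1"] x by auto
    then show ?thesis using N False x y beyond by simp
  qed
  have "y > 1" using n beyond by simp
  then show ?thesis
    using left N x y beyond n by (simp add: add.commute)
qed

lemma shielded_neighbours_upper:
  assumes v: "regular v" and E: "shielded v (x, y)" and y: "y \<ge> 0" and nw: "\<not> on_wall v (x, y)"
  shows "shielded v (x+1, y) \<and> shielded v (x-1, y) \<and> shielded v (x, y+1) \<and> shielded v (x, y-1)"
proof (cases "x < 0")
  case x: True
  then have ge: "-x + y \<ge> west v y" using E y by auto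
  show ?thesis
  proof (cases "-x + y = west v y")
    case True
    then have "west_capped v y" using nw x y by auto
    with True show ?thesis by (rule shielded_neighbours_corner[OF v x y])
  next
    case False
    with ge show ?thesis using shielded_neighbours_west[OF v x y] by simp
  qed
next
  case False
  then have "has_north v" "x \<ge> 0" "y > 0" "x + y > north v x" using E nw y by auto
  then show ?thesis by (rule shielded_neighbours_north[OF v])
qed

lemma shielded_boundary_on_wall:
  assumes v: "regular v" and E: "shielded v p" and a: "grid_adj p q" and nq: "\<not> shielded v q"
  shows "on_wall v p"
proof (rule ccontr)
  assume nw: "\<not> on_wall v p"
  obtain x y where p: "p = (x, y)" by (cases p)
  have q: "q = (x+1, y) \<or> q = (x-1, y) \<or> q = (x, y+1) \<or> q = (x, y-1)"
    using grid_adj_cases a p by simp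
  have E': "shielded v (x, y)" and nw': "\<not> on_wall v (x, y)" using E nw unfolding p .
  show False
  proof (cases "y \<ge> 0")
    case True
    then show False using shielded_neighbours_upper[OF v E' True nw'] q nq by blast
  next
    case False
    have "shielded (mirror v) (x, -y)" "\<not> on_wall (mirror v) (x, -y)"
      using E' nw' by (simp_all add: shielded_mirror on_wall_mirror del: shielded.simps on_wall.simps)
    then have "shielded (mirror v) (x+1, -y) \<and> shielded (mirror v) (x-1, -y) \<and>
        shielded (mirror v) (x, -y+1) \<and> shielded (mirror v) (x, -y-1)"
      using shielded_neighbours_upper[of "mirror v" x "-y"] v False by (simp add: regular_mirror del: shielded.simps on_wall.simps)
    then have "shielded v (x+1, y) \<and> shielded v (x-1, y) \<and> shielded v (x, y-1) \<and> shielded v (x, 1+y)"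
      by (simp add: shielded_mirror del: shielded.simps)
    then show False using q nq by (auto simp only: add.commute)
  qed
qed

section \<open>Growing the upper end of the wall\<close>

text \<open>
  At turn \<open>t\<close> the fire occupies (at most) the ball of radius \<open>t - 1\<close>.  In the shape below,
  the rows before \<open>top_row\<close> carry built wall vertices at distance \<open>\<le> t\<close>, while from
  \<open>top_row\<close> on the wall is only planned, at distances \<open>\<ge> t\<close> growing by 2 per row;
  likewise for the columns of the north arm.
\<close>

definition upper_shape :: "int \<Rightarrow> wall \<Rightarrow> bool" where
  "upper_shape t v \<longleftrightarrow>
     (\<not> has_north v \<longrightarrow>
        1 \<le> top_row v \<and> top_row v \<le> t \<and> west v (top_row v - 1) \<le> t \<and>
        t \<le> west v (top_row v) \<and> west v (top_row v) \<le> t + 2 \<and>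
        (\<forall>y \<ge> top_row v. west v y = west v (top_row v) + 2 * (y - top_row v))) \<and>
     (has_north v \<longrightarrow>
        1 \<le> top_col v \<and> north v 0 \<le> t \<and> north v (top_col v - 1) \<le> t \<and>
        t \<le> north v (top_col v) \<and> north v (top_col v) \<le> t + 2 \<and>
        (\<forall>x \<ge> top_col v. north v x = north v (top_col v) + 2 * (x - top_col v)))"

text \<open>In a strict shape every built wall vertex is already at distance \<open>\<le> t - 1\<close>.\<close>

definition upper_strict :: "int \<Rightarrow> wall \<Rightarrow> bool" where
  "upper_strict t v \<longleftrightarrow> upper_shape t v \<and>
     (\<not> has_north v \<longrightarrow> west v (top_row v - 1) \<le> t - 1) \<and>
     (has_north v \<longrightarrow> north v (top_col v - 1) \<le> t - 1 \<and> north v 0 \<le> t - 1)"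

text \<open>
  The number of vertices of the sphere of radius \<open>t\<close> in the upper half plane that lie
  beyond the upper end of the wall, and whether the planned vertex at the upper end has
  reached the fire front (so that it must be built in this turn).
\<close>

definition upper_slack :: "int \<Rightarrow> wall \<Rightarrow> int" where
  "upper_slack t v = (if has_north v then t - top_col v else (t - top_row v) + t)"

definition upper_due :: "int \<Rightarrow> wall \<Rightarrow> bool" where
  "upper_due t v \<longleftrightarrow> (if has_north v then north v (top_col v) = t else west v (top_row v) = t)"

text \<open>
  Build \<open>m\<close> wall vertices on the sphere of radius \<open>t\<close> at the upper end and plan the rest
  of the wall with slope 2 behind them.  When the west part runs out of rows (at row
  \<open>t - 1\<close>) the wall turns into the north arm, hugging the column \<open>x = -1\<close> above.
\<close>

definition extend_upper :: "int \<Rightarrow> int \<Rightarrow> wall \<Rightarrow> wall" where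
  "extend_upper t m v =
     (if m \<le> 0 then v
      else if has_north v then
        v\<lparr>north := (\<lambda>x. if x < top_col v then north v x else if x < top_col v + m then t
                        else t + 2 * (x - (top_col v + m - 1))),
          top_col := top_col v + m\<rparr>
      else if m \<le> t - top_row v then
        v\<lparr>west := (\<lambda>y. if y < top_row v then west v y else if y < top_row v + m then t
                       else t + 2 * (y - (top_row v + m - 1))),
          top_row := top_row v + m\<rparr>
      else
        v\<lparr>west := (\<lambda>y. if y < top_row v then west v y else if y \<le> t - 1 then t else y + 1),
          has_north := True,
          north := (\<lambda>x. if x < m - (t - top_row v) then t
                        else t + 2 * (x - (m - (t - top_row v) - 1))),
          top_col := m - (t - top_row v)\<rparr>)"

definition same_upper :: "wall \<Rightarrow> wall \<Rightarrow> bool" where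
  "same_upper a b \<longleftrightarrow> (\<forall>y\<ge>0. west a y = west b y) \<and> has_north a = has_north b \<and>
     north a = north b \<and> top_row a = top_row b \<and> top_col a = top_col b"

lemma upper_shapeI:
  assumes "\<not> has_north v \<Longrightarrow> 1 \<le> top_row v \<and> top_row v \<le> t \<and> west v (top_row v - 1) \<le> t \<and>
      t \<le> west v (top_row v) \<and> west v (top_row v) \<le> t + 2"
    and "\<not> has_north v \<Longrightarrow>
      (\<And>y. y \<ge> top_row v \<Longrightarrow> west v y = west v (top_row v) + 2 * (y - top_row v))"
    and "has_north v \<Longrightarrow> 1 \<le> top_col v \<and> north v 0 \<le> t \<and> north v (top_col v - 1) \<le> t \<and>
      t \<le> north v (top_col v) \<and> north v (top_col v) \<le> t + 2"
    and "has_north v \<Longrightarrow>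
      (\<And>x. x \<ge> top_col v \<Longrightarrow> north v x = north v (top_col v) + 2 * (x - top_col v))"
  shows "upper_shape t v"
  unfolding upper_shape_def using assms by blast

lemma upper_shapeD_west:
  assumes "upper_shape t v" "\<not> has_north v"
  shows "1 \<le> top_row v" "top_row v \<le> t" "west v (top_row v - 1) \<le> t"
    "t \<le> west v (top_row v)" "west v (top_row v) \<le> t + 2"
    "\<And>y. y \<ge> top_row v \<Longrightarrow> west v y = west v (top_row v) + 2 * (y - top_row v)"
  using assms unfolding upper_shape_def by blast+

lemma upper_shapeD_north:
  assumes "upper_shape t v" "has_north v"
  shows "1 \<le> top_col v" "north v 0 \<le> t" "north v (top_col v - 1) \<le> t"
    "t \<le> north v (top_col v)" "north v (top_col v) \<le> t + 2"
    "\<And>x. x \<ge> top_col v \<Longrightarrow> north v x = north v (top_col v) + 2 * (x - top_col v)"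
  using assms unfolding upper_shape_def by blast+

lemma same_upper_sym: "same_upper a b \<Longrightarrow> same_upper b a"
  by (simp add: same_upper_def)

lemma same_upper_regular: "same_upper a b \<Longrightarrow> upper_regular a = upper_regular b"
  unfolding same_upper_def upper_regular_def profile_def by auto

lemma same_upper_shape:
  assumes e: "same_upper a b"
  shows "upper_shape t a = upper_shape t b"
proof -
  have eq: "has_north a = has_north b" "north a = north b" "top_row a = top_row b" "top_col a = top_col b"
    and west_eq: "\<And>y. y \<ge> 0 \<Longrightarrow> west a y = west b y"
    using e unfolding same_upper_def by auto
  have "\<not> has_north a \<Longrightarrow> 1 \<le> top_row a \<Longrightarrow> west a (top_row a - 1) = west b (top_row b - 1) \<and>
      west a (top_row a) = west b (top_row b) \<and> (\<forall>y \<ge> top_row a. west a y = west b y)"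
    using eq west_eq by auto
  then show ?thesis unfolding upper_shape_def eq by (smt (verit, best))
qed

lemma same_upper_strict:
  assumes e: "same_upper a b"
  shows "upper_strict t a = upper_strict t b"
proof -
  have eq: "has_north a = has_north b" "north a = north b" "top_row a = top_row b" "top_col a = top_col b"
    and west_eq: "\<And>y. y \<ge> 0 \<Longrightarrow> west a y = west b y"
    using e unfolding same_upper_def by auto
  have "upper_shape t a \<Longrightarrow> \<not> has_north a \<Longrightarrow> west a (top_row a - 1) = west b (top_row b - 1)"
    using eq west_eq upper_shapeD_west(1)[of t a] by auto
  then show ?thesis using same_upper_shape[OF e, of t] unfolding upper_strict_def eq by metis
qed

lemma same_upper_slack: "same_upper a b \<Longrightarrow> upper_slack t a = upper_slack t b"
  unfolding same_upper_def upper_slack_def by simp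

lemma same_upper_due:
  assumes "upper_shape t a" "same_upper a b"
  shows "upper_due t a = upper_due t b"
proof -
  have eq: "has_north a = has_north b" "north a = north b" "top_row a = top_row b" "top_col a = top_col b"
    and west_eq: "\<And>y. y \<ge> 0 \<Longrightarrow> west a y = west b y"
    using assms(2) unfolding same_upper_def by auto
  have "\<not> has_north a \<Longrightarrow> west a (top_row a) = west b (top_row b)"
    using eq west_eq upper_shapeD_west(1)[OF assms(1)] by auto
  then show ?thesis unfolding upper_due_def eq by auto
qed

lemma extend_upper_nonpos [simp]: "m \<le> 0 \<Longrightarrow> extend_upper t m v = v"
  unfolding extend_upper_def by simp

lemma extend_upper_south [simp]:
  "has_south (extend_upper t m v) = has_south v" "south (extend_upper t m v) = south v"
  "bot_row (extend_upper t m v) = bot_row v" "bot_col (extend_upper t m v) = bot_col v"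
  unfolding extend_upper_def by simp_all

lemma extend_upper_same_lower:
  assumes "upper_shape t v"
  shows "same_upper (mirror (extend_upper t m v)) (mirror v)"
  using upper_shapeD_west(1)[OF assms] unfolding same_upper_def extend_upper_def by auto

lemma extend_upper_north:
  assumes "has_north v" and "1 \<le> m"
  shows "west (extend_upper t m v) = west v" "has_north (extend_upper t m v) = True"
    "north (extend_upper t m v) = (\<lambda>x. if x < top_col v then north v x
       else if x < top_col v + m then t else t + 2 * (x - (top_col v + m - 1)))"
    "top_col (extend_upper t m v) = top_col v + m" "top_row (extend_upper t m v) = top_row v"
  using assms unfolding extend_upper_def by simp_all

lemma extend_upper_west:
  assumes "\<not> has_north v" and "1 \<le> m" "m \<le> t - top_row v"
  shows "west (extend_upper t m v) = (\<lambda>y. if y < top_row v then west v y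
       else if y < top_row v + m then t else t + 2 * (y - (top_row v + m - 1)))"
    "has_north (extend_upper t m v) = False" "top_row (extend_upper t m v) = top_row v + m"
    "north (extend_upper t m v) = north v" "top_col (extend_upper t m v) = top_col v"
  using assms unfolding extend_upper_def by simp_all

lemma extend_upper_turn:
  assumes s: "upper_shape t v" and nn: "\<not> has_north v" and m: "m > t - top_row v"
  shows "west (extend_upper t m v) =
      (\<lambda>y. if y < top_row v then west v y else if y \<le> t - 1 then t else y + 1)"
    "has_north (extend_upper t m v) = True"
    "north (extend_upper t m v) = (\<lambda>x. if x < m - (t - top_row v) then t
       else t + 2 * (x - (m - (t - top_row v) - 1)))"
    "top_col (extend_upper t m v) = m - (t - top_row v)"
  using m nn upper_shapeD_west(2)[OF s nn] unfolding extend_upper_def by simp_all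

lemma profile_advance:
  assumes g: "profile g" and a: "1 \<le> a" and m: "1 \<le> m" "a + m \<le> t"
    and e: "g (a - 1) \<le> t" "t \<le> g a"
  shows "profile (\<lambda>y. if y < a then g y else if y < a + m then t else t + 2 * (y - (a + m - 1)))"
  unfolding profile_def
proof (intro allI impI)
  fix y :: int assume y: "0 \<le> y"
  have "g y \<ge> y + 1 \<and> g y \<le> g (y+1) \<and> g (y+1) \<le> g y + 2" using g y unfolding profile_def by blast
  moreover have "g a \<le> g (a - 1) + 2" using spec[OF g[unfolded profile_def], of "a - 1"] a by simp
  ultimately show "(if y < a then g y else if y < a + m then t else t + 2 * (y - (a + m - 1))) \<ge> y + 1 \<and> 
    (if y < a then g y else if y < a + m then t else t + 2 * (y - (a + m - 1))) \<le>
      (if y + 1 < a then g (y+1) else if y + 1 < a + m then t else t + 2 * (y + 1 - (a + m - 1))) \<and>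
    (if y + 1 < a then g (y+1) else if y + 1 < a + m then t else t + 2 * (y + 1 - (a + m - 1))) \<le>
      (if y < a then g y else if y < a + m then t else t + 2 * (y - (a + m - 1))) + 2"
    using a m e by (cases "y + 1 = a") auto
qed

lemma upper_regular_extend_west:
  assumes H: "upper_regular v" and s: "upper_shape t v" and nn: "\<not> has_north v"
    and m: "1 \<le> m" "m \<le> t - top_row v"
  shows "upper_regular (extend_upper t m v)"
proof -
  have "profile (west (extend_upper t m v))"
    unfolding extend_upper_west[OF nn m]
    using profile_advance[of "west v" "top_row v" m t] H m upper_shapeD_west(1-5)[OF s nn]
    unfolding upper_regular_def by simp
  then show ?thesis using extend_upper_west(2)[OF nn m] unfolding upper_regular_def by simp
qed

lemma upper_regular_extend_north:
  assumes H: "upper_regular v" and s: "upper_shape t v" and N: "has_north v"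
    and m: "1 \<le> m" "m \<le> upper_slack t v"
  shows "upper_regular (extend_upper t m v)"
proof -
  note w = extend_upper_north[OF N m(1), of t]
  have "profile (north (extend_upper t m v))"
    unfolding w(3)
    using profile_advance[of "north v" "top_col v" m t] H N m upper_shapeD_north(1-5)[OF s N]
    unfolding upper_regular_def upper_slack_def by simp
  moreover have "north (extend_upper t m v) 0 = north v 0" using w(3) upper_shapeD_north(1)[OF s N] by simp
  ultimately show ?thesis using H w(1,2) N unfolding upper_regular_def by simp
qed

lemma upper_regular_extend_turn:
  assumes H: "upper_regular v" and s: "upper_shape t v" and nn: "\<not> has_north v"
    and m: "m > t - top_row v" "m \<le> upper_slack t v"
  shows "upper_regular (extend_upper t m v)"
proof -
  define u where "u = top_row v"
  note w = extend_upper_turn[OF s nn m(1), folded u_def]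
  have u: "1 \<le> u" "u \<le> t" "west v (u - 1) \<le> t" "t \<le> west v u"
    using upper_shapeD_west(1-4)[OF s nn] unfolding u_def by auto
  have jump: "west v u \<le> west v (u - 1) + 2" "west v (u - 1) \<ge> u"
    using upper_regularD_west[OF H, of "u - 1"] u by auto
  have k: "1 \<le> m - (t - u)" "m - (t - u) \<le> t" using m nn unfolding upper_slack_def u_def by auto
  have "profile (west (extend_upper t m v))"
    unfolding profile_def w(1)
  proof (intro allI impI)
    fix y :: int assume y: "0 \<le> y"
    then show "(if y < u then west v y else if y \<le> t - 1 then t else y + 1) \<ge> y + 1 \<and>
      (if y < u then west v y else if y \<le> t - 1 then t else y + 1) \<le>
        (if y + 1 < u then west v (y+1) else if y + 1 \<le> t - 1 then t else y + 1 + 1) \<and>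
      (if y + 1 < u then west v (y+1) else if y + 1 \<le> t - 1 then t else y + 1 + 1) \<le>
        (if y < u then west v y else if y \<le> t - 1 then t else y + 1) + 2"
      using upper_regularD_west[OF H y] u jump by (cases "y + 1 = u") auto
  qed
  moreover have "profile (north (extend_upper t m v))" unfolding profile_def w(3) using k by auto
  moreover have "west (extend_upper t m v) y = y + 1" if "y \<ge> north (extend_upper t m v) 0 - 1" for y
  proof (cases "y < u")
    case True
    then have y: "y = u - 1" and "u = t" using that k u unfolding w(3) by auto
    then have "west v (u - 1) = u" using u(3) jump(2) by linarith
    then show ?thesis using True y unfolding w(1) by simp
  qed (use that k in \<open>simp add: w(1,3)\<close>)
  ultimately show ?thesis using w(2) unfolding upper_regular_def by simp
qed

lemma upper_regular_extend:
  assumes H: "upper_regular v" and s: "upper_shape t v" and m: "m \<le> upper_slack t v"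
  shows "upper_regular (extend_upper t m v)"
proof (cases "m \<le> 0")
  case False
  consider "has_north v" | "\<not> has_north v" "m \<le> t - top_row v" | "\<not> has_north v" "m > t - top_row v"
    by linarith
  then show ?thesis
    by cases (use False upper_regular_extend_north[OF H s _ _ m] upper_regular_extend_west[OF H s]
        upper_regular_extend_turn[OF H s _ _ m] in auto)
qed (use H in simp)

text \<open>Without new vertices the planned end moves one step closer to the front.\<close>

lemma upper_strict_idle:
  assumes s: "upper_shape t v" and nd: "\<not> upper_due t v"
  shows "upper_strict (t+1) v \<and> upper_slack (t+1) v \<le> upper_slack t v + 2"
proof -
  have "upper_shape (t+1) v"
  proof (rule upper_shapeI)
    assume nn: "\<not> has_north v"
    then show "1 \<le> top_row v \<and> top_row v \<le> t + 1 \<and> west v (top_row v - 1) \<le> t + 1 \<and>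
        t + 1 \<le> west v (top_row v) \<and> west v (top_row v) \<le> t + 1 + 2"
      using nd upper_shapeD_west(1-5)[OF s nn] unfolding upper_due_def by auto
    show "\<And>y. y \<ge> top_row v \<Longrightarrow> west v y = west v (top_row v) + 2 * (y - top_row v)"
      using upper_shapeD_west(6)[OF s nn] by blast
  next
    assume N: "has_north v"
    then show "1 \<le> top_col v \<and> north v 0 \<le> t + 1 \<and> north v (top_col v - 1) \<le> t + 1 \<and>
        t + 1 \<le> north v (top_col v) \<and> north v (top_col v) \<le> t + 1 + 2"
      using nd upper_shapeD_north(1-5)[OF s N] unfolding upper_due_def by auto
    show "\<And>x. x \<ge> top_col v \<Longrightarrow> north v x = north v (top_col v) + 2 * (x - top_col v)"
      using upper_shapeD_north(6)[OF s N] by blast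
  qed
  then show ?thesis
    using upper_shapeD_west(3)[OF s] upper_shapeD_north(2,3)[OF s]
    unfolding upper_strict_def upper_slack_def by auto
qed

lemma upper_strict_extend_west:
  assumes s: "upper_shape t v" and nn: "\<not> has_north v" and m: "1 \<le> m" "m \<le> t - top_row v"
  defines "w \<equiv> extend_upper t m v"
  shows "upper_strict (t+1) w \<and> \<not> upper_due (t+1) w \<and> upper_slack (t+1) w \<le> upper_slack t v + 2 - m"
proof -
  note e = extend_upper_west[OF nn m, folded w_def]
  have u: "1 \<le> top_row v" using upper_shapeD_west(1)[OF s nn] .
  have "west w (top_row w - 1) = t" "west w (top_row w) = t + 2"
    "\<And>y. y \<ge> top_row w \<Longrightarrow> west w y = west w (top_row w) + 2 * (y - top_row w)"
    unfolding e using m u by auto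
  moreover have "upper_shape (t+1) w" by (rule upper_shapeI) (use calculation e m u in auto)
  ultimately show ?thesis unfolding upper_strict_def upper_due_def upper_slack_def using e nn by auto
qed

lemma upper_strict_extend_turn:
  assumes s: "upper_shape t v" and nn: "\<not> has_north v" and m: "m > t - top_row v" "m \<le> upper_slack t v"
  defines "w \<equiv> extend_upper t m v"
  shows "upper_strict (t+1) w \<and> \<not> upper_due (t+1) w \<and> upper_slack (t+1) w \<le> upper_slack t v + 2 - m"
proof -
  note e = extend_upper_turn[OF s nn m(1), folded w_def]
  have k: "1 \<le> m - (t - top_row v)" "m - (t - top_row v) \<le> t"
    using m nn unfolding upper_slack_def by auto
  have "north w 0 = t" "north w (top_col w - 1) = t" "north w (top_col w) = t + 2"
    "\<And>x. x \<ge> top_col w \<Longrightarrow> north w x = north w (top_col w) + 2 * (x - top_col w)"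
    unfolding e using k by auto
  moreover have "upper_shape (t+1) w" by (rule upper_shapeI) (use calculation e k in auto)
  ultimately show ?thesis unfolding upper_strict_def upper_due_def upper_slack_def using e k nn by auto
qed

lemma upper_strict_extend_north:
  assumes s: "upper_shape t v" and N: "has_north v" and m: "1 \<le> m" "m \<le> upper_slack t v"
  defines "w \<equiv> extend_upper t m v"
  shows "upper_strict (t+1) w \<and> \<not> upper_due (t+1) w \<and> upper_slack (t+1) w \<le> upper_slack t v + 2 - m"
proof -
  note e = extend_upper_north[OF N m(1), of t, folded w_def]
  have c: "1 \<le> top_col v" "north v 0 \<le> t" "top_col v + m \<le> t"
    using upper_shapeD_north(1,2)[OF s N] m N unfolding upper_slack_def by auto
  have "north w 0 = north v 0" "north w (top_col w - 1) = t" "north w (top_col w) = t + 2"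
    "\<And>x. x \<ge> top_col w \<Longrightarrow> north w x = north w (top_col w) + 2 * (x - top_col w)"
    unfolding e using c m by auto
  moreover have "upper_shape (t+1) w" by (rule upper_shapeI) (use calculation e c m in auto)
  ultimately show ?thesis unfolding upper_strict_def upper_due_def upper_slack_def using e c m N by auto
qed

lemma upper_strict_extend:
  assumes H: "upper_regular v" and s: "upper_shape t v" and m: "0 \<le> m" "m \<le> upper_slack t v"
    and d: "upper_due t v \<longrightarrow> m \<ge> 1"
  shows "upper_strict (t+1) (extend_upper t m v) \<and> (m \<ge> 1 \<longrightarrow> \<not> upper_due (t+1) (extend_upper t m v)) \<and>
    upper_slack (t+1) (extend_upper t m v) \<le> upper_slack t v + 2 - m"
proof (cases "m \<le> 0")
  case True
  then have "m = 0" using m by simp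
  then show ?thesis using upper_strict_idle[OF s] d by auto
next
  case False
  consider "has_north v" | "\<not> has_north v" "m \<le> t - top_row v" | "\<not> has_north v" "m > t - top_row v"
    by linarith
  then show ?thesis
    by cases (use False upper_strict_extend_north[OF s _ _ m(2)] upper_strict_extend_west[OF s]
        upper_strict_extend_turn[OF s _ _ m(2)] in auto)
qed

lemma upper_shape_planned_west:
  assumes "upper_shape t v" "\<not> has_north v" "y \<ge> top_row v"
  shows "west v y \<ge> t"
  using upper_shapeD_west(4)[OF assms(1,2)] upper_shapeD_west(6)[OF assms] assms(3) by simp

lemma upper_shape_planned_north:
  assumes "upper_shape t v" "has_north v" "x \<ge> top_col v"
  shows "north v x \<ge> t"
  using upper_shapeD_north(4)[OF assms(1,2)] upper_shapeD_north(6)[OF assms] assms(3) by simp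

lemma agree_within:
  assumes W: "\<And>y. west a y \<le> d \<or> west b y \<le> d \<Longrightarrow> west a y = west b y"
    and N: "\<And>x. x \<ge> 0 \<Longrightarrow> (has_north a \<and> north a x \<le> d) \<longleftrightarrow> (has_north b \<and> north b x \<le> d)"
    and N': "\<And>x. x \<ge> 0 \<Longrightarrow> has_north a \<Longrightarrow> north a x \<le> d \<Longrightarrow> north b x = north a x"
    and S: "has_south a = has_south b" "south a = south b"
    and C: "\<And>y. \<bar>y\<bar> < d \<Longrightarrow> west_capped a y = west_capped b y"
    and p: "l1 (x, y) \<le> d"
  shows "shielded a (x, y) = shielded b (x, y) \<and> on_wall a (x, y) = on_wall b (x, y)"
proof -
  have west_part: "(-x + \<bar>y\<bar> \<ge> west a y) = (-x + \<bar>y\<bar> \<ge> west b y) \<and>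
      (-x + \<bar>y\<bar> = west a y \<and> \<not> west_capped a y) = (-x + \<bar>y\<bar> = west b y \<and> \<not> west_capped b y)"
    if "x < 0"
  proof (cases "west a y = west b y")
    case True
    have "\<bar>y\<bar> < d" using p that by simp
    then show ?thesis using True C[of y] by simp
  next
    case False
    then have "west a y > d" "west b y > d" using W[of y] by linarith+
    moreover have "-x + \<bar>y\<bar> \<le> d" using p that by simp
    ultimately show ?thesis by simp
  qed
  have north_part: "(has_north a \<and> x + y \<ge> north a x) = (has_north b \<and> x + y \<ge> north b x) \<and>
      (has_north a \<and> x + y = north a x) = (has_north b \<and> x + y = north b x)"
    if "x \<ge> 0" "y > 0"
  proof (cases "has_north a \<and> north a x \<le> d")
    case True
    then show ?thesis using N[OF that(1)] N'[OF that(1)] by simp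
  next
    case False
    then have "\<not> (has_north b \<and> north b x \<le> d)" using N[OF that(1)] by simp
    moreover have "x + y \<le> d" using p that by simp
    ultimately show ?thesis using False by auto
  qed
  show ?thesis
  proof (cases "x < 0")
    case True
    then show ?thesis using west_part S by simp
  next
    case False
    then show ?thesis using north_part S by (cases "y > 0") simp_all
  qed
qed

lemma extend_upper_agree_north:
  assumes s: "upper_shape t v" and N: "has_north v" and m: "1 \<le> m" and p: "l1 (x, y) \<le> t - 1"
  shows "shielded (extend_upper t m v) (x, y) = shielded v (x, y) \<and>
    on_wall (extend_upper t m v) (x, y) = on_wall v (x, y)"
proof -
  note w = extend_upper_north[OF N m, of t]
  have same: "north (extend_upper t m v) x = north v x"
    if "north (extend_upper t m v) x \<le> t - 1 \<or> north v x \<le> t - 1" for x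
    using that w upper_shape_planned_north[OF s N, of x] by (cases "x < top_col v") (auto split: if_splits)
  show ?thesis
  proof (rule agree_within)
    show "(has_north (extend_upper t m v) \<and> north (extend_upper t m v) x \<le> t - 1)
        \<longleftrightarrow> (has_north v \<and> north v x \<le> t - 1)" for x
      using same w(2) N by metis
    show "north v x = north (extend_upper t m v) x" if "north (extend_upper t m v) x \<le> t - 1" for x
      by (metis same that)
    show "\<bar>y\<bar> < t - 1 \<Longrightarrow> west_capped (extend_upper t m v) y = west_capped v y" for y
      unfolding west_capped_def using w N upper_shapeD_north(1)[OF s N] by auto
  qed (use p w in simp_all)
qed

lemma extend_upper_agree_west:
  assumes s: "upper_shape t v" and nn: "\<not> has_north v" and m: "1 \<le> m" and p: "l1 (x, y) \<le> t - 1"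
  shows "shielded (extend_upper t m v) (x, y) = shielded v (x, y) \<and>
    on_wall (extend_upper t m v) (x, y) = on_wall v (x, y)"
proof -
  let ?w = "extend_upper t m v"
  have below: "west ?w y = west v y" if "y < top_row v" for y
  proof (cases "m \<le> t - top_row v")
    case True
    then show ?thesis using that extend_upper_west[OF nn m True] by simp
  qed (use that extend_upper_turn[OF s nn] in simp)
  have above: "west ?w y \<ge> t" if "y \<ge> top_row v" for y
  proof (cases "m \<le> t - top_row v")
    case True
    then show ?thesis using that extend_upper_west[OF nn m True] by simp
  qed (use that extend_upper_turn[OF s nn] in simp)
  have arm: "north ?w x \<ge> t" if "has_north ?w" for x
  proof (cases "m \<le> t - top_row v")
    case True
    then show ?thesis using that extend_upper_west[OF nn m True] by simp
  qed (use that extend_upper_turn[OF s nn] in simp)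
  show ?thesis
  proof (rule agree_within)
    show "west ?w y = west v y" if "west ?w y \<le> t - 1 \<or> west v y \<le> t - 1" for y
    proof (cases "y < top_row v")
      case False
      then show ?thesis using that above[of y] upper_shape_planned_west[OF s nn, of y] by arith
    qed (rule below)
    show "(has_north ?w \<and> north ?w x \<le> t - 1) \<longleftrightarrow> (has_north v \<and> north v x \<le> t - 1)" for x
      using arm[of x] nn by auto
    show "\<bar>y\<bar> < t - 1 \<Longrightarrow> west_capped ?w y = west_capped v y" for y
      unfolding west_capped_def using arm[of 0] nn by auto
    show "north v x = north ?w x" if "has_north ?w" "north ?w x \<le> t - 1" for x
      using arm[OF that(1), of x] that(2) by simp
  qed (use p in simp_all)
qed

lemma extend_upper_agree_within:
  assumes s: "upper_shape t v" and p: "l1 (x, y) \<le> t - 1"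
  shows "shielded (extend_upper t m v) (x, y) = shielded v (x, y) \<and>
    on_wall (extend_upper t m v) (x, y) = on_wall v (x, y)"
proof (cases "m \<le> 0")
  case False
  then have "1 \<le> m" by simp
  then show ?thesis
    using extend_upper_agree_north[OF s _ _ p] extend_upper_agree_west[OF s _ _ p]
    by (cases "has_north v") blast+
qed simp

section \<open>Wall vertices on the fire front\<close>

definition sphere_nw :: "int \<Rightarrow> int \<Rightarrow> int \<Rightarrow> (int \<times> int) set" where
  "sphere_nw t a b = (\<lambda>y. (y - t, y)) ` {a..<b}"

definition sphere_ne :: "int \<Rightarrow> int \<Rightarrow> int \<Rightarrow> (int \<times> int) set" where
  "sphere_ne t a b = (\<lambda>x. (x, t - x)) ` {a..<b}"

lemma finite_sphere_nw [simp]: "finite (sphere_nw t a b)"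
  and finite_sphere_ne [simp]: "finite (sphere_ne t a b)"
  by (simp_all add: sphere_nw_def sphere_ne_def)

lemma card_sphere_nw: "int (card (sphere_nw t a b)) \<le> max 0 (b - a)"
  and card_sphere_ne: "int (card (sphere_ne t a b)) \<le> max 0 (b - a)"
  unfolding sphere_nw_def sphere_ne_def
  using card_image_le[of "{a..<b}" "\<lambda>y. (y - t, y)"] card_image_le[of "{a..<b}" "\<lambda>x. (x, t - x)"]
  by simp_all

lemma card_Un_int_le: "finite A \<Longrightarrow> finite B \<Longrightarrow> int (card (A \<union> B)) \<le> int (card A) + int (card B)"
  using card_Un_le[of A B] by linarith

definition new_upper_wall :: "int \<Rightarrow> int \<Rightarrow> wall \<Rightarrow> (int \<times> int) set" where
  "new_upper_wall t m v =
     (if m \<le> 0 then {}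
      else if has_north v then sphere_ne t (top_col v) (top_col v + m)
      else if m \<le> t - top_row v then sphere_nw t (top_row v) (top_row v + m)
      else sphere_nw t (top_row v) t \<union> sphere_ne t 0 (m - (t - top_row v)))"

text \<open>Vertices of the built part of the upper wall that lie on the sphere of radius \<open>t\<close>.\<close>

definition upper_wall_at :: "int \<Rightarrow> wall \<Rightarrow> int \<times> int \<Rightarrow> bool" where
  "upper_wall_at t v p \<longleftrightarrow>
     (fst p < 0 \<and> 0 \<le> snd p \<and> (if has_north v then snd p < north v 0 else snd p < top_row v) \<and>
        west v (snd p) = t) \<or>
     (has_north v \<and> fst p \<ge> 0 \<and> snd p > 0 \<and> fst p < top_col v \<and> north v (fst p) = t)"

lemma card_new_upper_wall:
  assumes s: "upper_shape t v" and m: "0 \<le> m"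
  shows "finite (new_upper_wall t m v) \<and> int (card (new_upper_wall t m v)) \<le> m"
proof -
  have "int (card (sphere_nw t (top_row v) t \<union> sphere_ne t 0 (m - (t - top_row v)))) \<le> m"
    if "\<not> has_north v" "m > t - top_row v"
    using card_Un_int_le[of "sphere_nw t (top_row v) t" "sphere_ne t 0 (m - (t - top_row v))"]
      card_sphere_nw[of t "top_row v" t] card_sphere_ne[of t 0 "m - (t - top_row v)"]
      upper_shapeD_west(2)[OF s that(1)] that(2) by simp
  then show ?thesis
    using m card_sphere_nw[of t "top_row v" "top_row v + m"] card_sphere_ne[of t "top_col v" "top_col v + m"]
    unfolding new_upper_wall_def by auto
qed

lemma on_wall_sphere_upper:
  assumes "\<bar>x\<bar> + \<bar>y\<bar> = t" "y > 0 \<or> (y = 0 \<and> x < 0)" "on_wall v (x, y)"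
  shows "(x < 0 \<and> x = y - t \<and> y \<ge> 0 \<and> west v y = t \<and> \<not> west_capped v y) \<or>
    (has_north v \<and> x \<ge> 0 \<and> y > 0 \<and> y = t - x \<and> north v x = t)"
  using assms by (cases "x < 0") auto

lemma upper_shape_planned_west_due:
  assumes "upper_shape t v" "\<not> has_north v" "y \<ge> top_row v" "west v y = t"
  shows "upper_due t v"
  using upper_shapeD_west(4)[OF assms(1,2)] upper_shapeD_west(6)[OF assms(1-3)] assms(2,3,4)
  unfolding upper_due_def by simp

lemma upper_shape_planned_north_due:
  assumes "upper_shape t v" "has_north v" "x \<ge> top_col v" "north v x = t"
  shows "upper_due t v"
  using upper_shapeD_north(4)[OF assms(1,2)] upper_shapeD_north(6)[OF assms(1-3)] assms(2,3,4)
  unfolding upper_due_def by simp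

lemma on_wall_sphere_idle:
  assumes s: "upper_shape t v" and nd: "\<not> upper_due t v"
    and p: "\<bar>x\<bar> + \<bar>y\<bar> = t" "y > 0 \<or> (y = 0 \<and> x < 0)" and wl: "on_wall v (x, y)"
  shows "upper_wall_at t v (x, y)"
  using on_wall_sphere_upper[OF p wl]
proof
  assume W: "x < 0 \<and> x = y - t \<and> y \<ge> 0 \<and> west v y = t \<and> \<not> west_capped v y"
  show ?thesis
  proof (cases "has_north v")
    case False
    then have "y < top_row v" using W upper_shape_planned_west_due[OF s False, of y] nd by force
    then show ?thesis using W False unfolding upper_wall_at_def by simp
  qed (use W in \<open>auto simp: upper_wall_at_def west_capped_def\<close>)
next
  assume N: "has_north v \<and> x \<ge> 0 \<and> y > 0 \<and> y = t - x \<and> north v x = t"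
  then have "x < top_col v" using upper_shape_planned_north_due[OF s, of x] nd by force
  then show ?thesis using N unfolding upper_wall_at_def by simp
qed

lemma on_wall_sphere_extend_north:
  assumes s: "upper_shape t v" and N: "has_north v" and m: "1 \<le> m"
    and p: "\<bar>x\<bar> + \<bar>y\<bar> = t" "y > 0 \<or> (y = 0 \<and> x < 0)" and wl: "on_wall (extend_upper t m v) (x, y)"
  shows "(x, y) \<in> new_upper_wall t m v \<or> upper_wall_at t v (x, y)"
  using on_wall_sphere_upper[OF p wl]
proof
  note w = extend_upper_north[OF N m, of t]
  assume "x < 0 \<and> x = y - t \<and> y \<ge> 0 \<and> west (extend_upper t m v) y = t \<and>
    \<not> west_capped (extend_upper t m v) y"
  then show ?thesis
    using w N upper_shapeD_north(1)[OF s N] by (auto simp: upper_wall_at_def west_capped_def)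
next
  note w = extend_upper_north[OF N m, of t]
  assume A: "has_north (extend_upper t m v) \<and> x \<ge> 0 \<and> y > 0 \<and> y = t - x \<and>
    north (extend_upper t m v) x = t"
  consider "x < top_col v" | "top_col v \<le> x" "x < top_col v + m" | "x \<ge> top_col v + m" by linarith
  then show ?thesis
  proof cases
    case 1
    then show ?thesis using A w N by (simp add: upper_wall_at_def)
  next
    case 2
    then show ?thesis using A N m unfolding new_upper_wall_def sphere_ne_def by auto
  next
    case 3
    then show ?thesis using A w m by simp
  qed
qed

lemma on_wall_sphere_extend_west:
  assumes s: "upper_shape t v" and nn: "\<not> has_north v" and m: "1 \<le> m" "m \<le> t - top_row v"
    and p: "\<bar>x\<bar> + \<bar>y\<bar> = t" "y > 0 \<or> (y = 0 \<and> x < 0)" and wl: "on_wall (extend_upper t m v) (x, y)"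
  shows "(x, y) \<in> new_upper_wall t m v \<or> upper_wall_at t v (x, y)"
proof -
  note w = extend_upper_west[OF nn m]
  have A: "x < 0" "x = y - t" "y \<ge> 0" "west (extend_upper t m v) y = t"
    using on_wall_sphere_upper[OF p wl] w by auto
  consider "y < top_row v" | "top_row v \<le> y" "y < top_row v + m" | "y \<ge> top_row v + m" by linarith
  then show ?thesis
  proof cases
    case 1
    then show ?thesis using A w nn by (simp add: upper_wall_at_def)
  next
    case 2
    then show ?thesis using A nn m unfolding new_upper_wall_def sphere_nw_def by auto
  next
    case 3
    then show ?thesis using A w m by simp
  qed
qed

lemma on_wall_sphere_extend_turn:
  assumes s: "upper_shape t v" and nn: "\<not> has_north v" and m: "m > t - top_row v"
    and p: "\<bar>x\<bar> + \<bar>y\<bar> = t" "y > 0 \<or> (y = 0 \<and> x < 0)" and wl: "on_wall (extend_upper t m v) (x, y)"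
  shows "(x, y) \<in> new_upper_wall t m v \<or> upper_wall_at t v (x, y)"
  using on_wall_sphere_upper[OF p wl]
proof
  note w = extend_upper_turn[OF s nn m]
  have m1: "m \<ge> 1" using m upper_shapeD_west(2)[OF s nn] by simp
  assume A: "x < 0 \<and> x = y - t \<and> y \<ge> 0 \<and> west (extend_upper t m v) y = t \<and>
    \<not> west_capped (extend_upper t m v) y"
  consider "y < top_row v" | "top_row v \<le> y" "y < t" | "y \<ge> t" by linarith
  then show ?thesis
  proof cases
    case 1
    then show ?thesis using A w nn by (simp add: upper_wall_at_def)
  next
    case 2
    then show ?thesis using A nn m m1 unfolding new_upper_wall_def sphere_nw_def by auto
  next
    case 3
    then have "west_capped (extend_upper t m v) y" using w m unfolding west_capped_def by simp
    then show ?thesis using A by simp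
  qed
next
  note w = extend_upper_turn[OF s nn m]
  have m1: "m \<ge> 1" using m upper_shapeD_west(2)[OF s nn] by simp
  assume A: "has_north (extend_upper t m v) \<and> x \<ge> 0 \<and> y > 0 \<and> y = t - x \<and>
    north (extend_upper t m v) x = t"
  then have "x < m - (t - top_row v)" using w by (cases "x < m - (t - top_row v)") auto
  then show ?thesis using A nn m m1 unfolding new_upper_wall_def sphere_ne_def by auto
qed

lemma on_wall_sphere_extend_upper:
  assumes s: "upper_shape t v" and m: "0 \<le> m" and d: "upper_due t v \<longrightarrow> m \<ge> 1"
    and p: "\<bar>x\<bar> + \<bar>y\<bar> = t" "y > 0 \<or> (y = 0 \<and> x < 0)" and wl: "on_wall (extend_upper t m v) (x, y)"
  shows "(x, y) \<in> new_upper_wall t m v \<or> upper_wall_at t v (x, y)"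
proof (cases "m \<le> 0")
  case True
  then show ?thesis using on_wall_sphere_idle[OF s _ p] wl d by simp
next
  case False
  then have m1: "1 \<le> m" by simp
  consider "has_north v" | "\<not> has_north v" "m \<le> t - top_row v" | "\<not> has_north v" "m > t - top_row v"
    by linarith
  then show ?thesis
    by cases (use on_wall_sphere_extend_north[OF s _ m1 p wl] on_wall_sphere_extend_west[OF s _ m1 _ p wl]
        on_wall_sphere_extend_turn[OF s _ _ p wl] in blast)+
qed

lemma same_upper_new_wall: "same_upper a b \<Longrightarrow> new_upper_wall t m a = new_upper_wall t m b"
  unfolding same_upper_def new_upper_wall_def by simp

lemma same_upper_wall_at: "same_upper a b \<Longrightarrow> upper_wall_at t a p = upper_wall_at t b p"
  unfolding same_upper_def upper_wall_at_def by auto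

lemma same_upper_on_wall:
  assumes e: "same_upper a b" and ha: "upper_regular (mirror a)" and hb: "upper_regular (mirror b)"
    and y: "y \<ge> 0"
  shows "on_wall a (x, y) = on_wall b (x, y)"
proof -
  have "west_capped a y = (has_north a \<and> y \<ge> north a 0)"
    unfolding west_capped_def using upper_regularD_north[OF ha, of 0] y by auto
  moreover have "west_capped b y = (has_north b \<and> y \<ge> north b 0)"
    unfolding west_capped_def using upper_regularD_north[OF hb, of 0] y by auto
  moreover have "has_north a = has_north b" "north a = north b" "west a y = west b y"
    using e y unfolding same_upper_def by auto
  ultimately show ?thesis using y by simp
qed

definition extend_wall :: "int \<Rightarrow> int \<Rightarrow> int \<Rightarrow> wall \<Rightarrow> wall" where
  "extend_wall t mu ml v = mirror (extend_upper t ml (mirror (extend_upper t mu v)))"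

lemma same_upper_extend_wall:
  assumes s: "upper_shape t v" and sl: "upper_shape t (mirror v)"
  shows "same_upper (extend_wall t mu ml v) (extend_upper t mu v)"
  using extend_upper_same_lower[of t "mirror (extend_upper t mu v)" ml]
    same_upper_shape[OF extend_upper_same_lower[OF s]] sl
  unfolding extend_wall_def by simp

lemma extend_wall_step:
  assumes V: "regular v" and s: "upper_shape t v" and sl: "upper_shape t (mirror v)"
    and mu: "0 \<le> mu" "mu \<le> upper_slack t v" and ml: "0 \<le> ml" "ml \<le> upper_slack t (mirror v)"
    and du: "upper_due t v \<longrightarrow> mu \<ge> 1" and dl: "upper_due t (mirror v) \<longrightarrow> ml \<ge> 1"
  defines "w \<equiv> extend_wall t mu ml v"
  shows "regular w" "upper_strict (t+1) w" "upper_strict (t+1) (mirror w)"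
    "mu \<ge> 1 \<Longrightarrow> \<not> upper_due (t+1) w" "ml \<ge> 1 \<Longrightarrow> \<not> upper_due (t+1) (mirror w)"
    "upper_slack (t+1) w \<le> upper_slack t v + 2 - mu"
    "upper_slack (t+1) (mirror w) \<le> upper_slack t (mirror v) + 2 - ml"
proof -
  define v1 where "v1 = extend_upper t mu v"
  have w: "mirror w = extend_upper t ml (mirror v1)" unfolding w_def v1_def extend_wall_def by simp
  have H: "upper_regular v" and HL: "upper_regular (mirror v)" using V unfolding regular_def by auto
  have e1: "same_upper (mirror v1) (mirror v)" and e2: "same_upper w v1"
    unfolding w_def v1_def by (rule extend_upper_same_lower[OF s], rule same_upper_extend_wall[OF s sl])
  have sl1: "upper_shape t (mirror v1)" and HL1: "upper_regular (mirror v1)"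
    and ml1: "ml \<le> upper_slack t (mirror v1)" and dl1: "upper_due t (mirror v1) \<longrightarrow> ml \<ge> 1"
    using same_upper_shape[OF e1] same_upper_regular[OF e1] same_upper_slack[OF e1]
      same_upper_due[OF sl same_upper_sym[OF e1]] sl HL ml dl by auto
  have U1: "upper_strict (t+1) v1 \<and> (mu \<ge> 1 \<longrightarrow> \<not> upper_due (t+1) v1) \<and>
      upper_slack (t+1) v1 \<le> upper_slack t v + 2 - mu"
    unfolding v1_def by (rule upper_strict_extend[OF H s mu du])
  have U2: "upper_strict (t+1) (mirror w) \<and> (ml \<ge> 1 \<longrightarrow> \<not> upper_due (t+1) (mirror w)) \<and>
      upper_slack (t+1) (mirror w) \<le> upper_slack t (mirror v1) + 2 - ml"
    unfolding w by (rule upper_strict_extend[OF HL1 sl1 ml(1) ml1 dl1])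
  have "upper_regular v1" unfolding v1_def by (rule upper_regular_extend[OF H s mu(2)])
  moreover have "upper_regular (mirror w)" unfolding w by (rule upper_regular_extend[OF HL1 sl1 ml1])
  ultimately show "regular w" unfolding regular_def using same_upper_regular[OF e2] by simp
  show "upper_strict (t+1) w" using same_upper_strict[OF e2] U1 by simp
  show "mu \<ge> 1 \<Longrightarrow> \<not> upper_due (t+1) w"
    using same_upper_due[OF _ same_upper_sym[OF e2]] U1 unfolding upper_strict_def by blast
  show "upper_slack (t+1) w \<le> upper_slack t v + 2 - mu" using same_upper_slack[OF e2] U1 by simp
  show "upper_strict (t+1) (mirror w)" "ml \<ge> 1 \<Longrightarrow> \<not> upper_due (t+1) (mirror w)"
    "upper_slack (t+1) (mirror w) \<le> upper_slack t (mirror v) + 2 - ml"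
    using U2 same_upper_slack[OF e1] by simp_all
qed

lemma extend_wall_agree_within:
  assumes s: "upper_shape t v" and sl: "upper_shape t (mirror v)" and d: "l1 p \<le> t - 1"
  shows "shielded (extend_wall t mu ml v) p = shielded v p \<and>
    on_wall (extend_wall t mu ml v) p = on_wall v p"
proof -
  obtain x y where p: "p = (x, y)" by (cases p)
  define v1 where "v1 = extend_upper t mu v"
  have "upper_shape t (mirror v1)"
    using same_upper_shape[OF extend_upper_same_lower[OF s]] sl unfolding v1_def by simp
  then have "shielded (extend_upper t ml (mirror v1)) (x, -y) = shielded (mirror v1) (x, -y) \<and>
      on_wall (extend_upper t ml (mirror v1)) (x, -y) = on_wall (mirror v1) (x, -y)"
    using d p by (intro extend_upper_agree_within) simp_all
  moreover have "shielded v1 (x, y) = shielded v (x, y) \<and> on_wall v1 (x, y) = on_wall v (x, y)"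
    using d p unfolding v1_def by (intro extend_upper_agree_within[OF s]) simp
  ultimately show ?thesis
    unfolding extend_wall_def v1_def[symmetric] p
    by (simp add: shielded_mirror on_wall_mirror del: shielded.simps on_wall.simps)
qed

lemma on_wall_sphere_extend_wall:
  assumes V: "regular v" and s: "upper_shape t v" and sl: "upper_shape t (mirror v)"
    and mu: "0 \<le> mu" "mu \<le> upper_slack t v" and ml: "0 \<le> ml" "ml \<le> upper_slack t (mirror v)"
    and du: "upper_due t v \<longrightarrow> mu \<ge> 1" and dl: "upper_due t (mirror v) \<longrightarrow> ml \<ge> 1"
    and p: "\<bar>x\<bar> + \<bar>y\<bar> = t" and wl: "on_wall (extend_wall t mu ml v) (x, y)"
  shows "(x, y) \<in> new_upper_wall t mu v \<or> (x, y) \<in> mirror_pt ` new_upper_wall t ml (mirror v) \<or>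
    upper_wall_at t v (x, y) \<or> upper_wall_at t (mirror v) (x, -y)"
proof -
  define v1 where "v1 = extend_upper t mu v"
  have w: "extend_wall t mu ml v = mirror (extend_upper t ml (mirror v1))"
    unfolding v1_def extend_wall_def by simp
  have H: "upper_regular v" and HL: "upper_regular (mirror v)" using V unfolding regular_def by auto
  have e1: "same_upper (mirror v1) (mirror v)" and e2: "same_upper (extend_wall t mu ml v) v1"
    unfolding v1_def by (rule extend_upper_same_lower[OF s], rule same_upper_extend_wall[OF s sl])
  have sl1: "upper_shape t (mirror v1)" and HL1: "upper_regular (mirror v1)"
    and dl1: "upper_due t (mirror v1) \<longrightarrow> ml \<ge> 1"
    using same_upper_shape[OF e1] same_upper_regular[OF e1]
      same_upper_due[OF sl same_upper_sym[OF e1]] sl HL dl by auto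
  consider "y > 0 \<or> (y = 0 \<and> x < 0)" | "y < 0" | "y = 0" "x \<ge> 0" by linarith
  then show ?thesis
  proof cases
    case 1
    have "upper_regular (mirror (extend_wall t mu ml v))"
      using extend_wall_step(1)[OF V s sl mu ml du dl] unfolding regular_def by simp
    then have "on_wall v1 (x, y)"
      using same_upper_on_wall[OF e2 _ HL1, of y x] wl 1 by auto
    then show ?thesis using on_wall_sphere_extend_upper[OF s mu(1) du p 1] unfolding v1_def by blast
  next
    case 2
    have "on_wall (extend_upper t ml (mirror v1)) (x, -y)"
      using wl unfolding w by (simp add: on_wall_mirror del: on_wall.simps)
    then have "(x, -y) \<in> new_upper_wall t ml (mirror v1) \<or> upper_wall_at t (mirror v1) (x, -y)"
      using on_wall_sphere_extend_upper[OF sl1 ml(1) dl1, of x "-y"] p 2 by simp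
    then have "(x, -y) \<in> new_upper_wall t ml (mirror v) \<or> upper_wall_at t (mirror v) (x, -y)"
      using same_upper_new_wall[OF e1] same_upper_wall_at[OF e1] by simp
    moreover have "(x, y) = mirror_pt (x, -y)" by simp
    ultimately show ?thesis by force
  next
    case 3
    then show ?thesis using wl by (simp add: west_capped_def)
  qed
qed

lemma upper_strict_built_west:
  assumes H: "upper_regular v" and s: "upper_strict t v" and y: "0 \<le> y"
    and built: "if has_north v then y < north v 0 else y < top_row v"
  shows "west v y \<le> t - 1"
proof (cases "has_north v")
  case True
  have "west v y \<le> west v (north v 0 - 1)" using west_mono[OF H] y built True by simp
  also have "\<dots> = north v 0" using upper_regularD_corner[OF H True, of "north v 0 - 1"] by simp
  finally show ?thesis using s True unfolding upper_strict_def by simp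
next
  case False
  have "west v y \<le> west v (top_row v - 1)" using west_mono[OF H] y built False by simp
  then show ?thesis using s False unfolding upper_strict_def by simp
qed

lemma upper_strict_built_north:
  assumes H: "upper_regular v" and s: "upper_strict t v" and N: "has_north v"
    and x: "0 \<le> x" "x < top_col v"
  shows "north v x \<le> t - 1"
  using north_mono[OF H N, of x "top_col v - 1"] x s N unfolding upper_strict_def by simp

lemma upper_wall_at_strict:
  assumes "upper_regular v" "upper_strict t v"
  shows "\<not> upper_wall_at t v p"
  using upper_strict_built_west[OF assms, of "snd p"] upper_strict_built_north[OF assms, of "fst p"]
  unfolding upper_wall_at_def by (auto split: if_splits)

lemma upper_strict_bounds:
  assumes H: "upper_regular v" and s: "upper_strict t v"
  shows "\<not> has_north v \<Longrightarrow> top_row v \<le> t - 1" "has_north v \<Longrightarrow> top_col v \<le> t - 1"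
  using upper_regularD_west[OF H, of "top_row v - 1"] upper_regularD_north[OF H, of "top_col v - 1"]
    upper_shapeD_west(1) upper_shapeD_north(1) s
  unfolding upper_strict_def by force+

text \<open>
  The vertices at distance \<open>t\<close> that still have to be protected once the fire reaches
  distance \<open>t - 1\<close>; \<open>slack\<close> bounds their number (the summand 1 is the vertex \<open>(t, 0)\<close>).
\<close>

definition frontier :: "wall \<Rightarrow> int \<Rightarrow> (int \<times> int) set" where
  "frontier v t = {q. l1 q = t \<and> (\<not> shielded v q \<or> on_wall v q)}"

definition upper_frontier :: "int \<Rightarrow> wall \<Rightarrow> (int \<times> int) set" where
  "upper_frontier t v =
     (if has_north v then sphere_ne t (top_col v) t else sphere_nw t (top_row v) t \<union> sphere_ne t 0 t)"

definition slack :: "wall \<Rightarrow> int \<Rightarrow> int" where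
  "slack v t = upper_slack t v + upper_slack t (mirror v) + 1"

lemma card_upper_frontier:
  assumes H: "upper_regular v" and s: "upper_strict t v" and t: "t \<ge> 1"
  shows "finite (upper_frontier t v) \<and> int (card (upper_frontier t v)) \<le> upper_slack t v"
proof (cases "has_north v")
  case True
  then show ?thesis using card_sphere_ne[of t "top_col v" t] upper_strict_bounds(2)[OF H s]
    unfolding upper_frontier_def upper_slack_def by simp
next
  case False
  then show ?thesis
    using card_Un_int_le[of "sphere_nw t (top_row v) t" "sphere_ne t 0 t"]
      card_sphere_nw[of t "top_row v" t] card_sphere_ne[of t 0 t] upper_strict_bounds(1)[OF H s] t
    unfolding upper_frontier_def upper_slack_def by simp
qed

lemma frontier_upper_west:
  assumes H: "upper_regular v" and s: "upper_strict t v" and x: "x < 0" "x = y - t" and y: "y \<ge> 0"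
    and X: "\<not> shielded v (x, y) \<or> on_wall v (x, y)"
  shows "(x, y) \<in> upper_frontier t v"
proof (cases "if has_north v then y < north v 0 else y < top_row v")
  case True
  then have "west v y \<le> t - 1" by (rule upper_strict_built_west[OF H s y])
  then show ?thesis using X x y by simp
next
  case False
  show ?thesis
  proof (cases "has_north v")
    case True
    then have "west v y = y + 1" "west_capped v y"
      using False upper_regularD_corner[OF H True, of y] unfolding west_capped_def by auto
    then show ?thesis using X x y by simp
  next
    case nn: False
    then show ?thesis using False x unfolding upper_frontier_def sphere_nw_def by auto
  qed
qed

lemma frontier_upper_north:
  assumes H: "upper_regular v" and s: "upper_strict t v" and x: "x \<ge> 0" and y: "y > 0" "y = t - x"
    and X: "\<not> shielded v (x, y) \<or> on_wall v (x, y)"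
  shows "(x, y) \<in> upper_frontier t v"
proof (cases "has_north v")
  case True
  show ?thesis
  proof (cases "x < top_col v")
    case False
    then show ?thesis using True x y unfolding upper_frontier_def sphere_ne_def by auto
  qed (use upper_strict_built_north[OF H s True x] X x y True in simp)
next
  case False
  then show ?thesis using x y unfolding upper_frontier_def sphere_ne_def by auto
qed

lemma frontier_subset:
  assumes V: "regular v" and s: "upper_strict t v" and sl: "upper_strict t (mirror v)"
  shows "frontier v t \<subseteq> upper_frontier t v \<union> mirror_pt ` upper_frontier t (mirror v) \<union> {(t, 0)}"
proof
  fix q assume q: "q \<in> frontier v t"
  obtain x y where qe: "q = (x, y)" by (cases q)
  have H: "upper_regular v" and HL: "upper_regular (mirror v)" using V unfolding regular_def by auto
  have p: "\<bar>x\<bar> + \<bar>y\<bar> = t" and X: "\<not> shielded v (x, y) \<or> on_wall v (x, y)"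
    using q qe unfolding frontier_def by auto
  have X': "\<not> shielded (mirror v) (x, -y) \<or> on_wall (mirror v) (x, -y)"
    using X by (simp add: shielded_mirror on_wall_mirror del: shielded.simps on_wall.simps)
  have upper: "(x, y) \<in> upper_frontier t v" if "y > 0 \<or> (y = 0 \<and> x < 0)"
  proof (cases "x < 0")
    case True
    show ?thesis by (rule frontier_upper_west[OF H s True _ _ X]) (use p that True in auto)
  next
    case False
    show ?thesis by (rule frontier_upper_north[OF H s _ _ _ X]) (use p that False in auto)
  qed
  have lower: "(x, -y) \<in> upper_frontier t (mirror v)" if "y < 0"
  proof (cases "x < 0")
    case True
    show ?thesis by (rule frontier_upper_west[OF HL sl True _ _ X']) (use p that True in auto)
  next
    case False
    show ?thesis by (rule frontier_upper_north[OF HL sl _ _ _ X']) (use p that False in auto)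
  qed
  consider "y > 0 \<or> (y = 0 \<and> x < 0)" | "y < 0" | "y = 0" "x \<ge> 0" by linarith
  then show "q \<in> upper_frontier t v \<union> mirror_pt ` upper_frontier t (mirror v) \<union> {(t, 0)}"
  proof cases
    case 2
    then have "q = mirror_pt (x, -y)" "(x, -y) \<in> upper_frontier t (mirror v)" using qe lower by auto
    then show ?thesis by blast
  qed (use upper qe p in auto)
qed

lemma card_Un_image_le:
  "finite A \<Longrightarrow> finite B \<Longrightarrow> int (card (A \<union> f ` B)) \<le> int (card A) + int (card B)"
  using card_Un_int_le[of A "f ` B"] card_image_le[of B f] by simp

lemma card_frontier:
  assumes V: "regular v" and s: "upper_strict t v" and sl: "upper_strict t (mirror v)" and t: "t \<ge> 1"
  shows "finite (frontier v t) \<and> int (card (frontier v t)) \<le> slack v t"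
proof -
  let ?A = "upper_frontier t v \<union> mirror_pt ` upper_frontier t (mirror v)"
  have H: "upper_regular v" and HL: "upper_regular (mirror v)" using V unfolding regular_def by auto
  note c1 = card_upper_frontier[OF H s t] and c2 = card_upper_frontier[OF HL sl t]
  have fA: "finite (?A \<union> {(t, 0)})" using c1 c2 by simp
  have "int (card (?A \<union> {(t, 0)})) \<le> int (card ?A) + 1"
    using card_Un_int_le[of ?A "{(t, 0)}"] c1 c2 by simp
  also have "\<dots> \<le> slack v t"
    using card_Un_image_le[of "upper_frontier t v" "upper_frontier t (mirror v)" mirror_pt] c1 c2
    unfolding slack_def by simp
  finally show ?thesis
    using card_mono[OF fA frontier_subset[OF V s sl]] finite_subset[OF frontier_subset[OF V s sl] fA]
    by simp
qed

section \<open>One turn of the strategy\<close>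

definition wall_within :: "wall \<Rightarrow> int \<Rightarrow> (int \<times> int) set" where
  "wall_within v d = {p. on_wall v p \<and> l1 p \<le> d}"

text \<open>
  How many of \<open>k\<close> new wall vertices go to the upper end.  A single one goes to the end
  that is due (the two ends are never due at the same time); two or more are split so
  that both ends advance.
\<close>

definition upper_share :: "int \<Rightarrow> wall \<Rightarrow> int \<Rightarrow> int" where
  "upper_share t v k =
     (if k \<le> 1 then (if upper_due t (mirror v) \<and> \<not> upper_due t v then 0 else k)
      else min (upper_slack t v) (k - 1))"

lemma upper_share_bounds:
  assumes k: "0 \<le> k" "k \<le> upper_slack t v + upper_slack t (mirror v)"
    and c: "upper_slack t v \<ge> 1" "upper_slack t (mirror v) \<ge> 1"
    and nb: "\<not> (upper_due t v \<and> upper_due t (mirror v))"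
    and k0: "upper_due t v \<or> upper_due t (mirror v) \<longrightarrow> k \<ge> 1"
  shows "0 \<le> upper_share t v k" "upper_share t v k \<le> upper_slack t v"
    "0 \<le> k - upper_share t v k" "k - upper_share t v k \<le> upper_slack t (mirror v)"
    "upper_due t v \<Longrightarrow> upper_share t v k \<ge> 1" "upper_due t (mirror v) \<Longrightarrow> k - upper_share t v k \<ge> 1"
    "k \<ge> 1 \<Longrightarrow> upper_share t v k \<ge> 1 \<or> k - upper_share t v k \<ge> 1"
  using assms unfolding upper_share_def by (auto split: if_splits)

text \<open>The first wall is a wedge whose tip \<open>(-t, 0)\<close> is its only built vertex.\<close>

definition initial :: "int \<Rightarrow> wall" where
  "initial t = \<lparr>west = (\<lambda>y. t + 2 * \<bar>y\<bar>), has_north = False, north = (\<lambda>x. 0),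
     has_south = False, south = (\<lambda>x. 0), top_row = 1, top_col = 0, bot_row = 1, bot_col = 0\<rparr>"

lemma initial_simps [simp]:
  "west (initial t) y = t + 2 * \<bar>y\<bar>" "has_north (initial t) = False" "has_south (initial t) = False"
  "top_row (initial t) = 1" "bot_row (initial t) = 1" "north (initial t) = (\<lambda>x. 0)"
  "south (initial t) = (\<lambda>x. 0)" "top_col (initial t) = 0" "bot_col (initial t) = 0"
  by (simp_all add: initial_def)

lemma mirror_initial [simp]: "mirror (initial t) = initial t"
  unfolding mirror_def initial_def by simp

lemma regular_initial: "t \<ge> 1 \<Longrightarrow> regular (initial t)"
  unfolding regular_def upper_regular_def profile_def by auto

lemma upper_shape_initial: "t \<ge> 1 \<Longrightarrow> upper_shape t (initial t)"
  by (rule upper_shapeI) auto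

lemma upper_due_initial: "\<not> upper_due t (initial t)" "\<not> upper_due (t+1) (initial t)"
  unfolding upper_due_def by auto

lemma upper_slack_initial: "upper_slack t (initial t) = 2 * t - 1"
  unfolding upper_slack_def by simp

lemma shielded_initial: "shielded (initial t) p \<Longrightarrow> l1 p \<ge> t"
  by (cases p) auto

lemma on_wall_initial: "on_wall (initial t) p \<Longrightarrow> l1 p \<ge> t"
  by (cases p) auto

lemma wall_within_initial: "wall_within (initial t) (t - 1) = {}"
  unfolding wall_within_def using on_wall_initial by fastforce

lemma upper_wall_at_initial:
  "{p. l1 p = t \<and> (upper_wall_at t (initial t) p \<or> upper_wall_at t (mirror (initial t)) (mirror_pt p))}
     \<subseteq> {(-t, 0)}"
  by (auto simp: upper_wall_at_def)

lemma upper_wall_at_strict_empty: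
  assumes "regular v" "upper_strict t v" "upper_strict t (mirror v)"
  shows "{p. l1 p = t \<and> (upper_wall_at t v p \<or> upper_wall_at t (mirror v) (mirror_pt p))} = {}"
  using upper_wall_at_strict[of v t] upper_wall_at_strict[of "mirror v" t] assms
  unfolding regular_def by auto

lemma new_wall_subset:
  assumes V: "regular v" and s: "upper_shape t v" and sl: "upper_shape t (mirror v)"
    and mu: "0 \<le> mu" "mu \<le> upper_slack t v" and ml: "0 \<le> ml" "ml \<le> upper_slack t (mirror v)"
    and du: "upper_due t v \<longrightarrow> mu \<ge> 1" and dl: "upper_due t (mirror v) \<longrightarrow> ml \<ge> 1"
  shows "wall_within (extend_wall t mu ml v) t - wall_within v (t - 1) \<subseteq>
    new_upper_wall t mu v \<union> mirror_pt ` new_upper_wall t ml (mirror v) \<union>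
    {p. l1 p = t \<and> (upper_wall_at t v p \<or> upper_wall_at t (mirror v) (mirror_pt p))}"
proof
  fix p assume p: "p \<in> wall_within (extend_wall t mu ml v) t - wall_within v (t - 1)"
  obtain x y where pe: "p = (x, y)" by (cases p)
  have w: "on_wall (extend_wall t mu ml v) (x, y)" and d: "l1 (x, y) \<le> t"
    and n: "\<not> (on_wall v (x, y) \<and> l1 (x, y) \<le> t - 1)"
    using p pe unfolding wall_within_def by auto
  have "l1 (x, y) = t"
    using extend_wall_agree_within[OF s sl, of "(x, y)" mu ml] w n d by fastforce
  then show "p \<in> new_upper_wall t mu v \<union> mirror_pt ` new_upper_wall t ml (mirror v) \<union>
      {p. l1 p = t \<and> (upper_wall_at t v p \<or> upper_wall_at t (mirror v) (mirror_pt p))}"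
    using on_wall_sphere_extend_wall[OF V s sl mu ml du dl _ w] pe by auto
qed

lemma card_new_wall:
  assumes V: "regular v" and s: "upper_shape t v" and sl: "upper_shape t (mirror v)"
    and mu: "0 \<le> mu" "mu \<le> upper_slack t v" and ml: "0 \<le> ml" "ml \<le> upper_slack t (mirror v)"
    and du: "upper_due t v \<longrightarrow> mu \<ge> 1" and dl: "upper_due t (mirror v) \<longrightarrow> ml \<ge> 1"
    and Q: "{p. l1 p = t \<and> (upper_wall_at t v p \<or> upper_wall_at t (mirror v) (mirror_pt p))} \<subseteq> Q"
    "finite Q"
  defines "new \<equiv> wall_within (extend_wall t mu ml v) t - wall_within v (t - 1)"
  shows "finite new \<and> int (card new) \<le> mu + ml + int (card Q)"
proof -
  let ?A = "new_upper_wall t mu v \<union> mirror_pt ` new_upper_wall t ml (mirror v)"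
  note c1 = card_new_upper_wall[OF s mu(1)] and c2 = card_new_upper_wall[OF sl ml(1)]
  have sub: "new \<subseteq> ?A \<union> Q" using new_wall_subset[OF V s sl mu ml du dl] Q(1) unfolding new_def by blast
  have fA: "finite (?A \<union> Q)" using c1 c2 Q(2) by simp
  have "int (card (?A \<union> Q)) \<le> mu + ml + int (card Q)"
    using card_Un_int_le[of ?A Q] card_Un_image_le[of "new_upper_wall t mu v" "new_upper_wall t ml (mirror v)" mirror_pt]
      c1 c2 Q(2) by simp
  then show ?thesis using card_mono[OF fA sub] finite_subset[OF sub fA] by linarith
qed

definition spread :: "(int \<times> int) set \<Rightarrow> (int \<times> int) set \<Rightarrow> (int \<times> int) set" where
  "spread B P = B \<union> {w. w \<notin> P \<and> (\<exists>u\<in>B. grid_adj u w)}"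

lemma spread_unshielded:
  assumes V: "regular v" and B: "\<forall>p\<in>B. l1 p \<le> d - 1 \<and> \<not> shielded v p"
    and P: "wall_within v d \<subseteq> P"
  shows "\<forall>p\<in>spread B P. l1 p \<le> d \<and> \<not> shielded v p"
proof
  fix w assume "w \<in> spread B P"
  then consider "w \<in> B" | u where "w \<notin> P" "u \<in> B" "grid_adj u w" unfolding spread_def by blast
  then show "l1 w \<le> d \<and> \<not> shielded v w"
  proof cases
    case 1
    then have "l1 w \<le> d - 1" "\<not> shielded v w" using B by blast+
    then show ?thesis by simp
  next
    case 2
    have u: "l1 u \<le> d - 1" "\<not> shielded v u" using B 2(2) by blast+
    then have dw: "l1 w \<le> d" using grid_adj_l1[OF 2(3)] by simp
    have "\<not> shielded v w"
    proof
      assume "shielded v w"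
      then have "on_wall v w" using shielded_boundary_on_wall[OF V _ grid_adj_sym[OF 2(3)] u(2)] by blast
      then show False using dw P 2(1) unfolding wall_within_def by blast
    qed
    with dw show ?thesis ..
  qed
qed

lemma spread_sealed:
  assumes V: "regular v" and B: "\<forall>p\<in>B. l1 p \<le> d - 1 \<and> \<not> shielded v p"
    and P: "wall_within v (d - 1) \<union> frontier v d \<subseteq> P"
  shows "\<forall>p\<in>spread B P. l1 p \<le> d - 1 \<and> \<not> shielded v p"
proof
  fix p assume p: "p \<in> spread B P"
  have "wall_within v d \<subseteq> wall_within v (d - 1) \<union> frontier v d"
    unfolding wall_within_def frontier_def by auto
  then have "l1 p \<le> d \<and> \<not> shielded v p" using spread_unshielded[OF V B] P p by blast
  moreover have "p \<in> B" if "l1 p = d" "\<not> shielded v p"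
    using that p P unfolding spread_def frontier_def by blast
  ultimately show "l1 p \<le> d - 1 \<and> \<not> shielded v p" using B by force
qed

text \<open>
  The invariant while the wall is being built, at the beginning of turn \<open>t\<close>: \<open>B\<close> and \<open>P\<close>
  are the burning and the protected vertices and \<open>T\<close> is the number of firefighters
  used so far.  The inequality \<open>slack v t + T \<le> 4 t\<close> is the potential argument.
\<close>

definition building_inv :: "wall \<Rightarrow> int \<Rightarrow> (int \<times> int) set \<Rightarrow> (int \<times> int) set \<Rightarrow> int \<Rightarrow> bool" where
  "building_inv v t B P T \<longleftrightarrow> t \<ge> 1 \<and> regular v \<and> upper_strict t v \<and> upper_strict t (mirror v) \<and>
     \<not> (upper_due t v \<and> upper_due t (mirror v)) \<and> P = wall_within v (t - 1) \<and>
     (\<forall>p\<in>B. l1 p \<le> t - 1 \<and> \<not> shielded v p) \<and> slack v t + T \<le> 4 * t"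

definition sealed_inv :: "wall \<Rightarrow> int \<Rightarrow> (int \<times> int) set \<Rightarrow> (int \<times> int) set \<Rightarrow> bool" where
  "sealed_inv v d B P \<longleftrightarrow> regular v \<and> (\<forall>p\<in>B. l1 p \<le> d - 1 \<and> \<not> shielded v p) \<and>
     wall_within v (d - 1) \<union> frontier v d \<subseteq> P"

lemma seal_step:
  assumes V: "regular v" and B: "\<forall>p\<in>B. l1 p \<le> t - 1 \<and> \<not> shielded v p" and P: "P = wall_within v (t - 1)"
  shows "frontier v t \<inter> (B \<union> P) = {}"
    "sealed_inv v t (spread B (P \<union> frontier v t)) (P \<union> frontier v t)"
proof -
  show "frontier v t \<inter> (B \<union> P) = {}" using B P unfolding frontier_def wall_within_def by fastforce
  have P': "wall_within v (t - 1) \<union> frontier v t \<subseteq> P \<union> frontier v t" using P by simp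
  show "sealed_inv v t (spread B (P \<union> frontier v t)) (P \<union> frontier v t)"
    unfolding sealed_inv_def using V spread_sealed[OF V B P'] P' by simp
qed

lemma sealed_step:
  assumes "sealed_inv v d B P" "P \<subseteq> P'"
  shows "sealed_inv v d (spread B P') P'"
  using assms spread_sealed unfolding sealed_inv_def by blast

definition grow :: "int \<Rightarrow> wall \<Rightarrow> int \<Rightarrow> wall" where
  "grow t v k = extend_wall t (upper_share t v k) (k - upper_share t v k) v"

lemma wall_within_extend_wall:
  assumes "upper_shape t v" "upper_shape t (mirror v)"
  shows "wall_within v (t - 1) \<subseteq> wall_within (extend_wall t mu ml v) t"
    and "p \<in> wall_within (extend_wall t mu ml v) t - wall_within v (t - 1) \<Longrightarrow> l1 p = t"
proof -
  note agree = extend_wall_agree_within[OF assms, where mu = mu and ml = ml]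
  show "wall_within v (t - 1) \<subseteq> wall_within (extend_wall t mu ml v) t"
    using agree unfolding wall_within_def by auto
  show "l1 p = t" if "p \<in> wall_within (extend_wall t mu ml v) t - wall_within v (t - 1)"
  proof (rule ccontr)
    assume "l1 p \<noteq> t"
    then show False using that agree[of p] unfolding wall_within_def by auto
  qed
qed

lemma grow_step:
  assumes V: "regular v" and s: "upper_shape t v" and sl: "upper_shape t (mirror v)"
    and B: "\<forall>p\<in>B. l1 p \<le> t - 1 \<and> \<not> shielded v p" and P: "P = wall_within v (t - 1)" and t: "t \<ge> 1"
    and k: "0 \<le> k" "k \<le> upper_slack t v + upper_slack t (mirror v)"
    and c: "upper_slack t v \<ge> 1" "upper_slack t (mirror v) \<ge> 1"
    and nb: "\<not> (upper_due t v \<and> upper_due t (mirror v))"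
    and k0: "upper_due t v \<or> upper_due t (mirror v) \<longrightarrow> k \<ge> 1"
    and kz: "k = 0 \<longrightarrow> \<not> upper_due (t+1) v"
    and Q: "{p. l1 p = t \<and> (upper_wall_at t v p \<or> upper_wall_at t (mirror v) (mirror_pt p))} \<subseteq> Q"
      "finite Q"
    and x: "k + int (card Q) \<le> x" and G: "slack v t + T + (x - k) \<le> 4 * t"
  defines "mv \<equiv> wall_within (grow t v k) t - wall_within v (t - 1)"
  shows "finite mv" "int (card mv) \<le> x" "mv \<inter> (B \<union> P) = {}"
    "building_inv (grow t v k) (t+1) (spread B (P \<union> mv)) (P \<union> mv) (T + x)"
proof -
  define mu where "mu = upper_share t v k"
  define ml where "ml = k - mu"
  note ch = upper_share_bounds[OF k c nb k0, folded mu_def, folded ml_def]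
  have w: "grow t v k = extend_wall t mu ml v" unfolding grow_def mu_def ml_def by simp
  have m: "0 \<le> mu" "mu \<le> upper_slack t v" "0 \<le> ml" "ml \<le> upper_slack t (mirror v)"
    and du: "upper_due t v \<longrightarrow> mu \<ge> 1" and dl: "upper_due t (mirror v) \<longrightarrow> ml \<ge> 1"
    using ch(1-6) by auto
  note step = extend_wall_step[OF V s sl m du dl, folded w]
  note agree = extend_wall_agree_within[OF s sl, where mu = mu and ml = ml, folded w]
  note card = card_new_wall[OF V s sl m du dl Q, folded w, folded mv_def]
  note within = wall_within_extend_wall[OF s sl, where mu = mu and ml = ml, folded w]
  show "finite mv" using card by simp
  show "int (card mv) \<le> x" using card x unfolding ml_def by simp
  show "mv \<inter> (B \<union> P) = {}" using within(2) B unfolding mv_def P by fastforce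
  have P': "P \<union> mv = wall_within (grow t v k) t" unfolding mv_def P using within(1) by blast
  have "\<forall>p\<in>B. l1 p \<le> t - 1 \<and> \<not> shielded (grow t v k) p" using B agree by simp
  then have B': "\<forall>p\<in>spread B (P \<union> mv). l1 p \<le> t + 1 - 1 \<and> \<not> shielded (grow t v k) p"
    using spread_unshielded[OF step(1), of B t "P \<union> mv"] P' by simp
  have nd: "\<not> (upper_due (t+1) (grow t v k) \<and> upper_due (t+1) (mirror (grow t v k)))"
  proof (cases "k \<ge> 1")
    case True
    then show ?thesis using ch(7) step(4,5) by auto
  next
    case False
    then have "k = 0" "mu = 0" "ml = 0" using ch(1,3) k ml_def by auto
    then have "grow t v k = v" using w unfolding extend_wall_def by simp
    then show ?thesis using kz \<open>k = 0\<close> by simp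
  qed
  have "slack (grow t v k) (t+1) + (T + x) \<le> 4 * (t+1)"
    using step(6,7) G unfolding slack_def ml_def by simp
  then show "building_inv (grow t v k) (t+1) (spread B (P \<union> mv)) (P \<union> mv) (T + x)"
    unfolding building_inv_def using step(1-3) nd P' B' t by simp
qed

lemma card_l1_sphere:
  assumes t: "t \<ge> 1"
  shows "finite {p. l1 p = t} \<and> int (card {p. l1 p = t}) \<le> 4 * t"
proof -
  let ?R = "sphere_nw t 1 t \<union> sphere_ne t 0 t"
  have upper: "(x, y) \<in> ?R" if "\<bar>x\<bar> + \<bar>y\<bar> = t" "y > 0" for x y
  proof (cases "x < 0")
    case True
    then have "(x, y) = (\<lambda>y. (y - t, y)) y" "y \<in> {1..<t}" using that by auto
    then show ?thesis unfolding sphere_nw_def by blast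
  next
    case False
    then have "(x, y) = (\<lambda>x. (x, t - x)) x" "x \<in> {0..<t}" using that by auto
    then show ?thesis unfolding sphere_ne_def by blast
  qed
  have sub: "{p. l1 p = t} \<subseteq> (?R \<union> mirror_pt ` ?R) \<union> {(t, 0), (-t, 0)}"
  proof
    fix p assume "p \<in> {p. l1 p = t}"
    then obtain x y where p: "p = (x, y)" "\<bar>x\<bar> + \<bar>y\<bar> = t" by (cases p) auto
    consider "y > 0" | "y < 0" | "y = 0" by linarith
    then show "p \<in> (?R \<union> mirror_pt ` ?R) \<union> {(t, 0), (-t, 0)}"
    proof cases
      case 2
      then have "(x, -y) \<in> ?R" "p = mirror_pt (x, -y)" using upper[of x "-y"] p by simp_all
      then show ?thesis by blast
    qed (use upper p in auto)
  qed
  have R: "int (card ?R) \<le> 2 * t - 1"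
    using card_Un_int_le[of "sphere_nw t 1 t" "sphere_ne t 0 t"] card_sphere_nw[of t 1 t]
      card_sphere_ne[of t 0 t] t by simp
  have "int (card ((?R \<union> mirror_pt ` ?R) \<union> {(t, 0), (-t, 0)})) \<le> int (card (?R \<union> mirror_pt ` ?R)) + 2"
    using card_Un_int_le[of "?R \<union> mirror_pt ` ?R" "{(t, 0), (-t, 0)}"] by (simp add: card_insert_if)
  also have "\<dots> \<le> 4 * t" using card_Un_image_le[of ?R ?R mirror_pt] R by simp
  finally have "int (card ((?R \<union> mirror_pt ` ?R) \<union> {(t, 0), (-t, 0)})) \<le> 4 * t" .
  moreover have fin: "finite ((?R \<union> mirror_pt ` ?R) \<union> {(t, 0), (-t, 0)})" by simp
  moreover have "card {p. l1 p = t} \<le> card ((?R \<union> mirror_pt ` ?R) \<union> {(t, 0), (-t, 0)})"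
    by (rule card_mono[OF fin sub])
  ultimately show ?thesis using finite_subset[OF sub fin] by linarith
qed

lemma card_frontier_le_sphere:
  "t \<ge> 1 \<Longrightarrow> finite (frontier v t) \<and> int (card (frontier v t)) \<le> 4 * t"
  using card_l1_sphere[of t] card_mono[of "{p. l1 p = t}" "frontier v t"]
    finite_subset[of "frontier v t" "{p. l1 p = t}"]
  unfolding frontier_def by fastforce

lemma slack_initial: "slack (initial t) t = 4 * t - 1"
  unfolding slack_def upper_slack_def by simp

lemma upper_slack_pos:
  assumes "upper_regular v" "upper_strict t v"
  shows "upper_slack t v \<ge> 1"
  using upper_strict_bounds[OF assms] upper_shapeD_west(1)[of t v] assms(2)
  unfolding upper_slack_def upper_strict_def by auto

section \<open>The strategy\<close>

text \<open>
  Player 1 waits until the first firefighter arrives, then builds the wall, and protects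
  the whole remaining front as soon as the firefighters of a turn suffice for it.  In the
  first building turn one firefighter goes to the tip \<open>(-t, 0)\<close> of the initial wedge.
  A phase step at turn \<open>n\<close> returns the next phase and the vertices protected in turn \<open>n\<close>.
\<close>

datatype phase = Idle | Building wall | Sealed

fun phase_step :: "nat \<Rightarrow> phase \<Rightarrow> nat \<Rightarrow> phase \<times> (int \<times> int) set" where
  "phase_step n Idle f =
     (if f = 0 then (Idle, {})
      else if card (frontier (initial (int n)) (int n)) \<le> f
      then (Sealed, frontier (initial (int n)) (int n))
      else (Building (grow (int n) (initial (int n)) (int f - 1)),
            wall_within (grow (int n) (initial (int n)) (int f - 1)) (int n) -
            wall_within (initial (int n)) (int n - 1)))"
| "phase_step n (Building v) f =
     (if card (frontier v (int n)) \<le> f then (Sealed, frontier v (int n))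
      else (Building (grow (int n) v (int f)),
            wall_within (grow (int n) v (int f)) (int n) - wall_within v (int n - 1)))"
| "phase_step n Sealed f = (Sealed, {})"

fun run_phases :: "nat \<Rightarrow> phase \<Rightarrow> nat list \<Rightarrow> phase" where
  "run_phases n s [] = s"
| "run_phases n s (f # fs) = run_phases (Suc n) (fst (phase_step n s f)) fs"

definition wall_strategy :: "nat list \<Rightarrow> (int \<times> int) set" where
  "wall_strategy xs =
     (if xs = [] then {}
      else snd (phase_step (length xs) (run_phases 1 Idle (butlast xs)) (last xs)))"

definition phase_at :: "(nat \<Rightarrow> nat) \<Rightarrow> nat \<Rightarrow> phase" where
  "phase_at f n = run_phases 1 Idle (revealed f n)"

lemma run_phases_snoc:
  "run_phases n s (xs @ [x]) = fst (phase_step (n + length xs) (run_phases n s xs) x)"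
  by (induction xs arbitrary: n s) auto

lemma revealed_Suc: "revealed f (Suc n) = revealed f n @ [f (Suc n)]"
  unfolding revealed_def by simp

lemma length_revealed [simp]: "length (revealed f n) = n"
  unfolding revealed_def by simp

lemma phase_at_0: "phase_at f 0 = Idle"
  unfolding phase_at_def revealed_def by simp

lemma phase_at_Suc: "phase_at f (Suc n) = fst (phase_step (Suc n) (phase_at f n) (f (Suc n)))"
  unfolding phase_at_def revealed_Suc run_phases_snoc by simp

lemma wall_strategy_Suc:
  "wall_strategy (revealed f (Suc n)) = snd (phase_step (Suc n) (phase_at f n) (f (Suc n)))"
  unfolding wall_strategy_def phase_at_def revealed_Suc by simp

lemma game_state_Suc:
  "game_state v s f (Suc n) =
     (spread (fst (game_state v s f n)) (snd (game_state v s f n) \<union> s (revealed f (Suc n))),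
      snd (game_state v s f n) \<union> s (revealed f (Suc n)))"
  by (cases "game_state v s f n") (simp add: spread_def)

text \<open>
  The invariant after \<open>n\<close> turns, with burning set \<open>B\<close>, protected set \<open>P\<close> and \<open>T\<close>
  firefighters used so far.
\<close>

fun phase_inv :: "nat \<Rightarrow> phase \<Rightarrow> (int \<times> int) set \<Rightarrow> (int \<times> int) set \<Rightarrow> nat \<Rightarrow> bool" where
  "phase_inv n Idle B P T \<longleftrightarrow> P = {} \<and> (\<forall>p\<in>B. l1 p \<le> int n) \<and> T = 0"
| "phase_inv n (Building v) B P T \<longleftrightarrow> building_inv v (int n + 1) B P (int T) \<and> T > 0"
| "phase_inv n Sealed B P T \<longleftrightarrow> (\<exists>v d. sealed_inv v d B P)"

definition legal_step :: "(int \<times> int) set \<Rightarrow> (int \<times> int) set \<Rightarrow> (int \<times> int) set \<Rightarrow> nat \<Rightarrow> bool" where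
  "legal_step B P S x \<longleftrightarrow> finite S \<and> card S \<le> x \<and> S \<inter> (B \<union> P) = {}"

lemma phase_step_seal:
  assumes "regular v" "\<forall>p\<in>B. l1 p \<le> t - 1 \<and> \<not> shielded v p" "P = wall_within v (t - 1)"
    "finite (frontier v t)" "card (frontier v t) \<le> x"
  shows "legal_step B P (frontier v t) x \<and>
    phase_inv n Sealed (spread B (P \<union> frontier v t)) (P \<union> frontier v t) T"
  using seal_step[OF assms(1-3)] assms(4,5) unfolding legal_step_def by auto

lemma phase_step_Idle:
  assumes I: "phase_inv n Idle B P T" and x: "x > 0"
  defines "S \<equiv> snd (phase_step (Suc n) Idle x)"
  shows "legal_step B P S x \<and>
    phase_inv (Suc n) (fst (phase_step (Suc n) Idle x)) (spread B (P \<union> S)) (P \<union> S) (T + x)"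
proof -
  define t where "t = int (Suc n)"
  have t: "t \<ge> 1" "int n = t - 1" unfolding t_def by simp_all
  have V: "regular (initial t)" using regular_initial[OF t(1)] .
  have B: "\<forall>p\<in>B. l1 p \<le> t - 1 \<and> \<not> shielded (initial t) p"
    using I shielded_initial[of t] t(2) by fastforce
  have P: "P = wall_within (initial t) (t - 1)" using I wall_within_initial by simp
  note cF = card_frontier_le_sphere[OF t(1), of "initial t"]
  show ?thesis
  proof (cases "card (frontier (initial t) t) \<le> x")
    case True
    then have "phase_step (Suc n) Idle x = (Sealed, frontier (initial t) t)"
      using x unfolding t_def by simp
    then show ?thesis using phase_step_seal[OF V B P] cF True unfolding S_def by simp
  next
    case False
    define k where "k = int x - 1"
    then have st: "phase_step (Suc n) Idle x = (Building (grow t (initial t) k),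
        wall_within (grow t (initial t) k) t - wall_within (initial t) (t - 1))"
      using x False unfolding t_def by simp
    have s: "upper_shape t (initial t)" using upper_shape_initial[OF t(1)] .
    note g = grow_step[OF V s _ B P t(1), of k "{(-t, 0)}" "int x" "int T"]
    have "legal_step B P S x \<and>
        building_inv (grow t (initial t) k) (t + 1) (spread B (P \<union> S)) (P \<union> S) (int T + int x)"
      using g upper_wall_at_initial[of t] upper_slack_initial[of t] upper_due_initial[of t]
        slack_initial[of t] s I x False cF t
      unfolding S_def st k_def legal_step_def by simp
    then show ?thesis using x t unfolding st S_def by simp
  qed
qed

lemma phase_step_Building:
  assumes I: "phase_inv n (Building v) B P T" and x: "x > 0"
  defines "S \<equiv> snd (phase_step (Suc n) (Building v) x)"
  shows "legal_step B P S x \<and>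
    phase_inv (Suc n) (fst (phase_step (Suc n) (Building v) x)) (spread B (P \<union> S)) (P \<union> S) (T + x)"
proof -
  define t where "t = int (Suc n)"
  have t: "t \<ge> 1" "int n + 1 = t" "2 + int n = t + 1" unfolding t_def by simp_all
  have iv: "regular v" "upper_strict t v" "upper_strict t (mirror v)"
    "\<not> (upper_due t v \<and> upper_due t (mirror v))" "P = wall_within v (t - 1)"
    "\<forall>p\<in>B. l1 p \<le> t - 1 \<and> \<not> shielded v p" "slack v t + int T \<le> 4 * t" "T > 0"
    using I t(2) unfolding phase_inv.simps building_inv_def by metis+
  have H: "upper_regular v" "upper_regular (mirror v)" using iv(1) unfolding regular_def by auto
  note cF = card_frontier[OF iv(1-3) t(1)]
  show ?thesis
  proof (cases "card (frontier v t) \<le> x")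
    case True
    then have "phase_step (Suc n) (Building v) x = (Sealed, frontier v t)" unfolding t_def by simp
    then show ?thesis using phase_step_seal[OF iv(1,6,5)] cF True unfolding S_def by simp
  next
    case False
    then have st: "phase_step (Suc n) (Building v) x = (Building (grow t v (int x)),
        wall_within (grow t v (int x)) t - wall_within v (t - 1))"
      unfolding t_def by simp
    have s: "upper_shape t v" "upper_shape t (mirror v)" using iv(2,3) unfolding upper_strict_def by auto
    note g = grow_step[OF iv(1) s iv(6) iv(5) t(1), of "int x" "{}" "int x" "int T"]
    have "legal_step B P S x \<and>
        building_inv (grow t v (int x)) (t + 1) (spread B (P \<union> S)) (P \<union> S) (int T + int x)"
      using g upper_wall_at_strict_empty[OF iv(1-3)] upper_slack_pos[OF H(1) iv(2)]
        upper_slack_pos[OF H(2) iv(3)] iv(4,7) x False cF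
      unfolding S_def st legal_step_def slack_def by simp
    then show ?thesis using x t unfolding st S_def by simp
  qed
qed

lemma phase_step_inv:
  assumes I: "phase_inv n ph B P T" and x: "\<And>v. ph = Building v \<Longrightarrow> x > 0"
  defines "S \<equiv> snd (phase_step (Suc n) ph x)"
  shows "legal_step B P S x \<and>
    phase_inv (Suc n) (fst (phase_step (Suc n) ph x)) (spread B (P \<union> S)) (P \<union> S) (T + x)"
proof (cases ph)
  case Idle
  show ?thesis
  proof (cases "x = 0")
    case True
    have "\<forall>p\<in>spread B P. l1 p \<le> int (Suc n)"
      using I Idle grid_adj_l1 unfolding spread_def by fastforce
    then show ?thesis using I Idle True unfolding S_def legal_step_def by simp
  qed (use phase_step_Idle I Idle in \<open>simp add: S_def\<close>)
next
  case (Building v)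
  then show ?thesis using phase_step_Building I x unfolding S_def by simp
next
  case Sealed
  then show ?thesis using I sealed_step[of _ _ B P P] unfolding S_def legal_step_def by auto
qed

lemma phase_step_sealed_by_budget:
  assumes I: "phase_inv n ph B P T" and budget: "T + x \<ge> 4 * Suc n"
  shows "fst (phase_step (Suc n) ph x) = Sealed"
proof (cases ph)
  case Idle
  then have "int (card (frontier (initial (int (Suc n))) (int (Suc n)))) \<le> int x"
    using I budget card_frontier_le_sphere[of "int (Suc n)" "initial (int (Suc n))"] by simp
  then show ?thesis using Idle I budget by simp
next
  case (Building v)
  then have "building_inv v (1 + int n) B P (int T)" using I by (simp add: add.commute)
  then have "int (card (frontier v (1 + int n))) \<le> int x"
    using card_frontier[of v "1 + int n"] budget unfolding building_inv_def by fastforce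
  then show ?thesis using Building by simp
qed simp

lemma legal_move_Suc:
  "legal_move v \<sigma> f (Suc n) \<longleftrightarrow>
     legal_step (fst (game_state v \<sigma> f n)) (snd (game_state v \<sigma> f n)) (\<sigma> (revealed f (Suc n))) (f (Suc n))"
  unfolding legal_move_def legal_step_def by (simp add: case_prod_beta Let_def)

lemma game_phase_inv:
  assumes hM: "\<forall>i\<ge>M. f i \<ge> 1" and h0: "\<forall>i. 1 \<le> i \<and> i < M \<longrightarrow> f i = 0"
  shows "phase_inv n (phase_at f n) (fst (game_state (0, 0) wall_strategy f n))
      (snd (game_state (0, 0) wall_strategy f n)) (\<Sum>i=1..n. f i) \<and>
    (\<forall>k\<in>{1..n}. legal_move (0, 0) wall_strategy f k)"
proof (induction n)
  case 0
  then show ?case using phase_at_0 by simp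
next
  case (Suc n)
  obtain B P where g: "game_state (0, 0) wall_strategy f n = (B, P)" by fastforce
  define S where "S = snd (phase_step (Suc n) (phase_at f n) (f (Suc n)))"
  have I: "phase_inv n (phase_at f n) B P (\<Sum>i=1..n. f i)" using Suc.IH g by simp
  have "f (Suc n) > 0" if "phase_at f n = Building v" for v
  proof -
    have pos: "(\<Sum>i=1..n. f i) > 0" using I that by simp
    have "\<exists>i\<in>{1..n}. f i \<noteq> 0"
    proof (rule ccontr)
      assume "\<not> (\<exists>i\<in>{1..n}. f i \<noteq> 0)"
      then have "(\<Sum>i=1..n. f i) = 0" by simp
      then show False using pos by simp
    qed
    then obtain i where i: "i \<in> {1..n}" "f i \<noteq> 0" by blast
    then have "M \<le> Suc n" using h0 by force
    then show ?thesis using hM by (simp add: Suc_le_eq)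
  qed
  note step = phase_step_inv[OF I this, folded S_def]
  have gs: "game_state (0, 0) wall_strategy f (Suc n) = (spread B (P \<union> S), P \<union> S)"
    using g unfolding game_state_Suc wall_strategy_Suc S_def by simp
  have "legal_move (0, 0) wall_strategy f (Suc n)"
    using step g unfolding legal_move_Suc wall_strategy_Suc S_def by simp
  then have "\<forall>k\<in>{1..Suc n}. legal_move (0, 0) wall_strategy f k"
    using Suc.IH by (auto simp: le_Suc_eq)
  moreover have "phase_inv (Suc n) (phase_at f (Suc n)) (spread B (P \<union> S)) (P \<union> S) (\<Sum>i=1..Suc n. f i)"
    using step unfolding phase_at_Suc by (simp add: add.commute)
  ultimately show ?case unfolding gs by simp
qed

lemma eventually_stable:
  assumes "finite D" "\<And>j. X j \<subseteq> D" "\<And>j. X j \<subseteq> X (Suc j)"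
  shows "\<exists>j. X (Suc j) = X j"
proof (rule ccontr)
  assume ne: "\<nexists>j. X (Suc j) = X j"
  have "j \<le> card (X j)" for j
  proof (induction j)
    case (Suc j)
    have "X j \<subset> X (Suc j)" using assms(3)[of j] ne by blast
    then have "card (X j) < card (X (Suc j))"
      using psubset_card_mono finite_subset[OF assms(2) assms(1)] by blast
    then show ?case using Suc by simp
  qed simp
  then have "Suc (card D) \<le> card (X (Suc (card D)))" .
  then show False using card_mono[OF assms(1,2), of "Suc (card D)"] by simp
qed

lemma finite_l1_ball: "finite {p. l1 p \<le> d}"
proof (rule finite_subset)
  show "{p. l1 p \<le> d} \<subseteq> {-d..d} \<times> {-d..d}" by auto
qed simp

lemma player1_wins_origin:
  assumes hM: "\<forall>i\<ge>M. f i \<ge> 1" and h0: "\<forall>i. 1 \<le> i \<and> i < M \<longrightarrow> f i = 0"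
    and N: "N \<ge> 1" "(\<Sum>i=1..N. f i) \<ge> 4 * N"
  shows "player1_wins (0, 0) wall_strategy f"
proof -
  define B where "B n = fst (game_state (0, 0) wall_strategy f n)" for n
  define P where "P n = snd (game_state (0, 0) wall_strategy f n)" for n
  note inv = game_phase_inv[OF hM h0]
  have "phase_at f N = Sealed"
    using phase_step_sealed_by_budget[OF conjunct1[OF inv], of "N - 1" "f N"] N phase_at_Suc[of f "N - 1"]
    by (cases N) simp_all
  then obtain v d where sealed: "sealed_inv v d (B N) (P N)"
    using inv[of N] unfolding B_def P_def by auto
  have later: "phase_at f (N + j) = Sealed \<and> B (N + Suc j) = spread (B (N + j)) (P (N + j)) \<and>
      P (N + Suc j) = P (N + j)" for j
    using \<open>phase_at f N = Sealed\<close>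
    by (induction j)
      (simp_all add: B_def P_def game_state_Suc wall_strategy_Suc phase_at_Suc del: game_state.simps)
  have "sealed_inv v d (B (N + j)) (P (N + j))" for j
    by (induction j) (use sealed later sealed_step in auto)
  then have "B (N + j) \<subseteq> {p. l1 p \<le> d - 1}" for j unfolding sealed_inv_def by blast
  moreover have "B (N + j) \<subseteq> B (N + Suc j)" for j using later[of j] unfolding spread_def by auto
  ultimately obtain j where "B (N + Suc j) = B (N + j)"
    using eventually_stable[OF finite_l1_ball[of "d - 1"], of "\<lambda>j. B (N + j)"] by auto
  then show ?thesis
    using inv[of "N + Suc j"] unfolding player1_wins_def B_def
    by (intro exI[of _ "N + Suc j"]) simp
qed

section \<open>Moving the ignition vertex\<close>

definition shift :: "vertex \<Rightarrow> vertex \<Rightarrow> vertex" where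
  "shift v p = (fst p + fst v, snd p + snd v)"

lemma inj_shift: "inj (shift v)"
  unfolding shift_def inj_def by auto

lemma grid_adj_shift: "grid_adj (shift v a) (shift v b) = grid_adj a b"
  unfolding shift_def grid_adj_def by simp

lemma shift_spread: "shift v ` spread B Q = spread (shift v ` B) (shift v ` Q)"
proof -
  have "shift v ` {w. w \<notin> Q \<and> (\<exists>u\<in>B. grid_adj u w)} =
      {w. w \<notin> shift v ` Q \<and> (\<exists>u\<in>shift v ` B. grid_adj u w)}" (is "?L = ?R")
  proof
    show "?L \<subseteq> ?R" using inj_shift[of v] by (auto simp: grid_adj_shift inj_eq)
    show "?R \<subseteq> ?L"
    proof
      fix w assume w: "w \<in> ?R"
      define w0 where "w0 = (fst w - fst v, snd w - snd v)"
      have w0: "w = shift v w0" unfolding w0_def shift_def by simp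
      then have "w0 \<notin> Q \<and> (\<exists>u\<in>B. grid_adj u w0)" using w by (auto simp: grid_adj_shift)
      then show "w \<in> ?L" using w0 by blast
    qed
  qed
  then show ?thesis unfolding spread_def by (simp add: image_Un)
qed

lemma game_state_shift:
  "game_state v (\<lambda>xs. shift v ` \<sigma> xs) f n =
     (shift v ` fst (game_state (0, 0) \<sigma> f n), shift v ` snd (game_state (0, 0) \<sigma> f n))"
proof (induction n)
  case 0
  have "shift v (0, 0) = v" unfolding shift_def by simp
  then show ?case by simp
next
  case (Suc n)
  show ?case
    unfolding game_state_Suc[of v] game_state_Suc[of "(0, 0)"] Suc by (simp add: shift_spread image_Un)
qed

lemma legal_move_shift: "legal_move v (\<lambda>xs. shift v ` \<sigma> xs) f k = legal_move (0, 0) \<sigma> f k"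
proof -
  obtain B P where g: "game_state (0, 0) \<sigma> f (k - 1) = (B, P)" by fastforce
  have g': "game_state v (\<lambda>xs. shift v ` \<sigma> xs) f (k - 1) = (shift v ` B, shift v ` P)"
    using game_state_shift g by simp
  have i: "inj_on (shift v) A" for A using inj_shift by (rule inj_on_subset) simp
  have "shift v ` \<sigma> (revealed f k) \<inter> (shift v ` B \<union> shift v ` P) = shift v ` (\<sigma> (revealed f k) \<inter> (B \<union> P))"
    by (simp add: image_Int[OF inj_shift] image_Un)
  then show ?thesis
    unfolding legal_move_def g g' using card_image[OF i] finite_image_iff[OF i] by (simp add: Let_def)
qed

lemma player1_wins_shift: "player1_wins (0, 0) \<sigma> f \<Longrightarrow> player1_wins v (\<lambda>xs. shift v ` \<sigma> xs) f"
  unfolding player1_wins_def using legal_move_shift game_state_shift by (metis fst_conv image_inv_f_f[OF inj_shift])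

theorem theorem2:
  shows "\<forall>v::vertex. \<exists>\<sigma>::strategy. \<forall>f::nat \<Rightarrow> nat.
     (\<exists>N\<ge>1. (\<Sum>i=1..N. f i) \<ge> 4 * N) \<and>
     (\<exists>M\<ge>1. (\<forall>i\<ge>M. f i \<ge> 1) \<and> (\<forall>i. 1 \<le> i \<and> i < M \<longrightarrow> f i = 0))
     \<longrightarrow> player1_wins v \<sigma> f"
proof
  fix v :: vertex
  show "\<exists>\<sigma>::strategy. \<forall>f::nat \<Rightarrow> nat.
     (\<exists>N\<ge>1. (\<Sum>i=1..N. f i) \<ge> 4 * N) \<and>
     (\<exists>M\<ge>1. (\<forall>i\<ge>M. f i \<ge> 1) \<and> (\<forall>i. 1 \<le> i \<and> i < M \<longrightarrow> f i = 0))
     \<longrightarrow> player1_wins v \<sigma> f"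
  proof (intro exI allI impI)
    fix f :: "nat \<Rightarrow> nat"
    assume "(\<exists>N\<ge>1. (\<Sum>i=1..N. f i) \<ge> 4 * N) \<and>
      (\<exists>M\<ge>1. (\<forall>i\<ge>M. f i \<ge> 1) \<and> (\<forall>i. 1 \<le> i \<and> i < M \<longrightarrow> f i = 0))"
    then have "player1_wins (0, 0) wall_strategy f" using player1_wins_origin by blast
    then show "player1_wins v (\<lambda>xs. shift v ` wall_strategy xs) f" by (rule player1_wins_shift)
  qed
qed

end
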